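(* Let $(A,\Delta)$ be an algebraic quantum hypergroup with counit $\varepsilon$ and antipode $S$. Then for all $x\in A$: - $\varepsilon(S(x))=\varepsilon(x)$; - $\Delta(S(x))=\zeta(S\otimes S)\Delta(x)$ in $M(A\otimes A)$. Here $\zeta$ is the flip $a\otimes b\mapsto b\otimes a$, extended to $M(A\otimes A)$, and $S\otimes S$ is extended to an anti-automorphism of $M(A\otimes A)$.
   Context: **Standing definitions.** All algebras are over $\mathbb C$, associative, possibly without identity, with non-degenerate product. $M(A)$ denotes the multiplier algebra and $\iota$ the identity map. *Comultiplication.* A regular comultiplication is a linear map $\Delta:A\to M(A\otimes A)$, not assumed multiplicative, such that: - $\Delta(a)(1\otimes b)$, $(a\otimes1)\Delta(b)$, $\Delta(a)(b\otimes1)$ and $(1\otimes a)\Delta(b)$ lie in $A\otimes A$; - $(a\otimes1\otimes1)(\Delta\otimes\iota)(\Delta(b)(1\otimes c))=(\iota\otimes\Delta)((a\otimes1)\Delta(b))(1\otimes1\otimes c)$. *Counit.* A counit is a homomorphism $\varepsilon$ with $(\varepsilon\otimes\iota)\Delta=\iota=(\iota\otimes\varepsilon)\Delta$. *Integrals.* A left integral is a nonzero $\varphi$ with $(\iota\otimes\varphi)\Delta(a)=\varphi(a)1$ in $M(A)$. A functional is faithful if $f(ab)=0\ \forall b$ or $f(ba)=0\ \forall b$ forces $a=0$. *Antipode.* An antipode relative to a faithful left integral $\varphi$ is a bijective linear anti-homomorphism $S$ with $S((\iota\otimes\varphi)(\Delta(a)(1\otimes b)))=(\iota\otimes\varphi)((1\otimes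 a)\Delta(b))$. *Algebraic quantum hypergroup.* A pair $(A,\Delta)$ with a regular comultiplication admitting a counit $\varepsilon$, a faithful left integral $\varphi$ and an antipode $S$ relative to $\varphi$. *)

theory Defs
  imports Complex_Main
begin

class calg = ring +
  fixes cscale :: "complex \<Rightarrow> 'a \<Rightarrow> 'a"
  assumes cs_add_right: "cscale c (x + y) = cscale c x + cscale c y"
    and cs_add_left: "cscale (c + d) x = cscale c x + cscale d x"
    and cs_assoc: "cscale c (cscale d x) = cscale (c * d) x"
    and cs_one: "cscale 1 x = x"
    and cs_mult_left: "cscale c x * y = cscale c (x * y)"
    and cs_mult_right: "x * cscale c y = cscale c (x * y)"

definition nondegenerate :: "'a::calg itself \<Rightarrow> bool" where
  "nondegenerate _ \<longleftrightarrow>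
     (\<forall>a::'a. (\<forall>b. a * b = 0) \<longrightarrow> a = 0) \<and> (\<forall>a::'a. (\<forall>b. b * a = 0) \<longrightarrow> a = 0)"

definition clin :: "('a::calg \<Rightarrow> 'b::calg) \<Rightarrow> bool" where
  "clin f \<longleftrightarrow> (\<forall>x y. f (x + y) = f x + f y) \<and> (\<forall>c x. f (cscale c x) = cscale c (f x))"

definition cfun :: "('a::calg \<Rightarrow> complex) \<Rightarrow> bool" where
  "cfun f \<longleftrightarrow> (\<forall>x y. f (x + y) = f x + f y) \<and> (\<forall>c x. f (cscale c x) = c * f x)"

text \<open>An element of the algebraic tensor product A\<otimes>A is represented faithfully by the
  functional it induces on the space of bilinear forms on A (that is, on the dual of A\<otimes>A);
  the value on non-bilinear arguments is normalised to 0. Similarly for A\<otimes>A\<otimes>A with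
  trilinear forms.\<close>

definition bil :: "('a::calg \<Rightarrow> 'a \<Rightarrow> complex) \<Rightarrow> bool" where
  "bil \<beta> \<longleftrightarrow> (\<forall>a. cfun (\<beta> a)) \<and> (\<forall>b. cfun (\<lambda>a. \<beta> a b))"

definition tril :: "('a::calg \<Rightarrow> 'a \<Rightarrow> 'a \<Rightarrow> complex) \<Rightarrow> bool" where
  "tril \<gamma> \<longleftrightarrow> (\<forall>a b. cfun (\<gamma> a b)) \<and> (\<forall>a c. cfun (\<lambda>b. \<gamma> a b c)) \<and> (\<forall>b c. cfun (\<lambda>a. \<gamma> a b c))"

type_synonym 'a t2 = "('a \<Rightarrow> 'a \<Rightarrow> complex) \<Rightarrow> complex"
type_synonym 'a t3 = "('a \<Rightarrow> 'a \<Rightarrow> 'a \<Rightarrow> complex) \<Rightarrow> complex"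
type_synonym 'a m2 = "('a t2 \<Rightarrow> 'a t2) \<times> ('a t2 \<Rightarrow> 'a t2)"
type_synonym 'a m3 = "('a t3 \<Rightarrow> 'a t3) \<times> ('a t3 \<Rightarrow> 'a t3)"

definition g2 :: "('a::calg \<Rightarrow> 'a \<Rightarrow> complex) \<Rightarrow> complex \<Rightarrow> complex" where
  "g2 \<beta> v = (if bil \<beta> then v else 0)"

definition g3 :: "('a::calg \<Rightarrow> 'a \<Rightarrow> 'a \<Rightarrow> complex) \<Rightarrow> complex \<Rightarrow> complex" where
  "g3 \<gamma> v = (if tril \<gamma> then v else 0)"

definition tp :: "'a::calg \<Rightarrow> 'a \<Rightarrow> 'a t2" where
  "tp a b = (\<lambda>\<beta>. g2 \<beta> (\<beta> a b))"

definition tp3 :: "'a::calg \<Rightarrow> 'a \<Rightarrow> 'a \<Rightarrow> 'a t3" where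
  "tp3 a b c = (\<lambda>\<gamma>. g3 \<gamma> (\<gamma> a b c))"

definition T2 :: "'a::calg t2 set" where
  "T2 = {T. \<exists>n a b. T = (\<lambda>\<beta>. \<Sum>i<(n::nat). tp (a i) (b i) \<beta>)}"

definition T3 :: "'a::calg t3 set" where
  "T3 = {T. \<exists>n a b c. T = (\<lambda>\<gamma>. \<Sum>i<(n::nat). tp3 (a i) (b i) (c i) \<gamma>)}"

definition addt :: "'a::calg t2 \<Rightarrow> 'a t2 \<Rightarrow> 'a t2" where
  "addt T U = (\<lambda>\<beta>. T \<beta> + U \<beta>)"

definition scalet :: "complex \<Rightarrow> 'a::calg t2 \<Rightarrow> 'a t2" where
  "scalet c T = (\<lambda>\<beta>. c * T \<beta>)"

text \<open>Product of A\<otimes>A: (a\<otimes>b)(c\<otimes>d) = ac\<otimes>bd.\<close>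
definition mult2 :: "'a::calg t2 \<Rightarrow> 'a t2 \<Rightarrow> 'a t2" where
  "mult2 T U = (\<lambda>\<beta>. g2 \<beta> (T (\<lambda>a b. U (\<lambda>c d. \<beta> (a * c) (b * d)))))"

text \<open>A multiplier of an algebra with carrier S and product mul is a pair (L,R) of maps
  S \<rightarrow> S (L y = m y, R x = x m) such that x (L y) = (R x) y.\<close>

definition is_mult :: "'t set \<Rightarrow> ('t \<Rightarrow> 't \<Rightarrow> 't) \<Rightarrow> ('t \<Rightarrow> 't) \<times> ('t \<Rightarrow> 't) \<Rightarrow> bool" where
  "is_mult S mul m \<longleftrightarrow> (\<forall>y\<in>S. fst m y \<in> S) \<and> (\<forall>x\<in>S. snd m x \<in> S) \<and>
     (\<forall>x\<in>S. \<forall>y\<in>S. mul x (fst m y) = mul (snd m x) y)"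

definition mult_eq :: "'t set \<Rightarrow> ('t \<Rightarrow> 't) \<times> ('t \<Rightarrow> 't) \<Rightarrow> ('t \<Rightarrow> 't) \<times> ('t \<Rightarrow> 't) \<Rightarrow> bool" where
  "mult_eq S m n \<longleftrightarrow> (\<forall>y\<in>S. fst m y = fst n y) \<and> (\<forall>x\<in>S. snd m x = snd n x)"

definition mmul :: "('t \<Rightarrow> 't) \<times> ('t \<Rightarrow> 't) \<Rightarrow> ('t \<Rightarrow> 't) \<times> ('t \<Rightarrow> 't) \<Rightarrow> ('t \<Rightarrow> 't) \<times> ('t \<Rightarrow> 't)" where
  "mmul m n = (\<lambda>y. fst m (fst n y), \<lambda>x. snd n (snd m x))"

definition emb :: "('t \<Rightarrow> 't \<Rightarrow> 't) \<Rightarrow> 't \<Rightarrow> ('t \<Rightarrow> 't) \<times> ('t \<Rightarrow> 't)" where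
  "emb mul t = (\<lambda>y. mul t y, \<lambda>x. mul x t)"

definition as2 :: "'a::calg m2 \<Rightarrow> 'a t2" where
  "as2 m = (SOME t. t \<in> T2 \<and> mult_eq T2 (emb mult2 t) m)"

definition in2 :: "'a::calg m2 \<Rightarrow> bool" where
  "in2 m \<longleftrightarrow> (\<exists>t\<in>T2. mult_eq T2 (emb mult2 t) m)"

text \<open>The multipliers 1\<otimes>b, b\<otimes>1 of A\<otimes>A and a\<otimes>1\<otimes>1, 1\<otimes>1\<otimes>c of A\<otimes>A\<otimes>A.\<close>
definition one_t :: "'a::calg \<Rightarrow> 'a m2" where
  "one_t b = (\<lambda>y \<beta>. g2 \<beta> (y (\<lambda>x z. \<beta> x (b * z))), \<lambda>y \<beta>. g2 \<beta> (y (\<lambda>x z. \<beta> x (z * b))))"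

definition t_one :: "'a::calg \<Rightarrow> 'a m2" where
  "t_one b = (\<lambda>y \<beta>. g2 \<beta> (y (\<lambda>x z. \<beta> (b * x) z)), \<lambda>y \<beta>. g2 \<beta> (y (\<lambda>x z. \<beta> (x * b) z)))"

definition t_one_one :: "'a::calg \<Rightarrow> 'a m3" where
  "t_one_one a = (\<lambda>W \<gamma>. g3 \<gamma> (W (\<lambda>x y z. \<gamma> (a * x) y z)),
                  \<lambda>W \<gamma>. g3 \<gamma> (W (\<lambda>x y z. \<gamma> (x * a) y z)))"

definition one_one_t :: "'a::calg \<Rightarrow> 'a m3" where
  "one_one_t c = (\<lambda>W \<gamma>. g3 \<gamma> (W (\<lambda>x y z. \<gamma> x y (c * z))),
                  \<lambda>W \<gamma>. g3 \<gamma> (W (\<lambda>x y z. \<gamma> x y (z * c))))"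

section \<open>Maps \<Delta>\<otimes>\<iota>, \<iota>\<otimes>\<Delta> : A\<otimes>A \<rightarrow> M(A\<otimes>A\<otimes>A)\<close>

text \<open>(\<Delta>\<otimes>\<iota>)(a\<otimes>b) = \<Delta>(a)\<otimes>b acting by (\<Delta>(a)\<otimes>b)(x\<otimes>y\<otimes>z) = \<Delta>(a)(x\<otimes>y)\<otimes>bz and
  (x\<otimes>y\<otimes>z)(\<Delta>(a)\<otimes>b) = (x\<otimes>y)\<Delta>(a)\<otimes>zb, extended linearly.\<close>
definition DeltaI :: "('a::calg \<Rightarrow> 'a m2) \<Rightarrow> 'a t2 \<Rightarrow> 'a m3" where
  "DeltaI \<Delta> T =
    (\<lambda>W \<gamma>. g3 \<gamma> (T (\<lambda>a b. W (\<lambda>x y z. fst (\<Delta> a) (tp x y) (\<lambda>x' y'. \<gamma> x' y' (b * z))))),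
     \<lambda>W \<gamma>. g3 \<gamma> (T (\<lambda>a b. W (\<lambda>x y z. snd (\<Delta> a) (tp x y) (\<lambda>x' y'. \<gamma> x' y' (z * b))))))"

definition IDelta :: "('a::calg \<Rightarrow> 'a m2) \<Rightarrow> 'a t2 \<Rightarrow> 'a m3" where
  "IDelta \<Delta> T =
    (\<lambda>W \<gamma>. g3 \<gamma> (T (\<lambda>a b. W (\<lambda>x y z. fst (\<Delta> b) (tp y z) (\<lambda>y' z'. \<gamma> (a * x) y' z')))),
     \<lambda>W \<gamma>. g3 \<gamma> (T (\<lambda>a b. W (\<lambda>x y z. snd (\<Delta> b) (tp y z) (\<lambda>y' z'. \<gamma> (x * a) y' z')))))"

section \<open>Slice maps \<omega>\<otimes>\<iota> and \<iota>\<otimes>\<omega> : A\<otimes>A \<rightarrow> A\<close>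

definition slice_l :: "('a::calg \<Rightarrow> complex) \<Rightarrow> 'a t2 \<Rightarrow> 'a" where
  "slice_l \<omega> T = (SOME x. \<forall>g. cfun g \<longrightarrow> T (\<lambda>u v. \<omega> u * g v) = g x)"

definition slice_r :: "('a::calg \<Rightarrow> complex) \<Rightarrow> 'a t2 \<Rightarrow> 'a" where
  "slice_r \<omega> T = (SOME x. \<forall>g. cfun g \<longrightarrow> T (\<lambda>u v. g u * \<omega> v) = g x)"

definition regular_comult :: "('a::calg \<Rightarrow> 'a m2) \<Rightarrow> bool" where
  "regular_comult \<Delta> \<longleftrightarrow>
     (\<forall>a. is_mult T2 mult2 (\<Delta> a)) \<and>
     (\<forall>a a'. \<forall>y\<in>T2. fst (\<Delta> (a + a')) y = addt (fst (\<Delta> a) y) (fst (\<Delta> a') y) \<and>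
                     snd (\<Delta> (a + a')) y = addt (snd (\<Delta> a) y) (snd (\<Delta> a') y)) \<and>
     (\<forall>c a. \<forall>y\<in>T2. fst (\<Delta> (cscale c a)) y = scalet c (fst (\<Delta> a) y) \<and>
                    snd (\<Delta> (cscale c a)) y = scalet c (snd (\<Delta> a) y)) \<and>
     (\<forall>a b. in2 (mmul (\<Delta> a) (one_t b)) \<and> in2 (mmul (t_one a) (\<Delta> b)) \<and>
            in2 (mmul (\<Delta> a) (t_one b)) \<and> in2 (mmul (one_t a) (\<Delta> b))) \<and>
     (\<forall>a b c. mult_eq T3
        (mmul (t_one_one a) (DeltaI \<Delta> (as2 (mmul (\<Delta> b) (one_t c)))))
        (mmul (IDelta \<Delta> (as2 (mmul (t_one a) (\<Delta> b)))) (one_one_t c)))"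

definition counit :: "('a::calg \<Rightarrow> 'a m2) \<Rightarrow> ('a \<Rightarrow> complex) \<Rightarrow> bool" where
  "counit \<Delta> \<epsilon> \<longleftrightarrow> cfun \<epsilon> \<and> (\<forall>a b. \<epsilon> (a * b) = \<epsilon> a * \<epsilon> b) \<and>
     (\<forall>a b. slice_l \<epsilon> (as2 (mmul (\<Delta> a) (one_t b))) = a * b \<and>
            slice_l \<epsilon> (as2 (mmul (one_t b) (\<Delta> a))) = b * a \<and>
            slice_r \<epsilon> (as2 (mmul (\<Delta> a) (t_one b))) = a * b \<and>
            slice_r \<epsilon> (as2 (mmul (t_one b) (\<Delta> a))) = b * a)"

definition left_integral :: "('a::calg \<Rightarrow> 'a m2) \<Rightarrow> ('a \<Rightarrow> complex) \<Rightarrow> bool" where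
  "left_integral \<Delta> \<phi> \<longleftrightarrow> cfun \<phi> \<and> (\<exists>a. \<phi> a \<noteq> 0) \<and>
     (\<forall>a b. slice_r \<phi> (as2 (mmul (\<Delta> a) (t_one b))) = cscale (\<phi> a) b \<and>
            slice_r \<phi> (as2 (mmul (t_one b) (\<Delta> a))) = cscale (\<phi> a) b)"

definition faithful :: "('a::calg \<Rightarrow> complex) \<Rightarrow> bool" where
  "faithful f \<longleftrightarrow> (\<forall>a. ((\<forall>b. f (a * b) = 0) \<or> (\<forall>b. f (b * a) = 0)) \<longrightarrow> a = 0)"

definition antipode :: "('a::calg \<Rightarrow> 'a m2) \<Rightarrow> ('a \<Rightarrow> complex) \<Rightarrow> ('a \<Rightarrow> 'a) \<Rightarrow> bool" where
  "antipode \<Delta> \<phi> S \<longleftrightarrow> bij S \<and> clin S \<and> (\<forall>a b. S (a * b) = S b * S a) \<and>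
     (\<forall>a b. S (slice_r \<phi> (as2 (mmul (\<Delta> a) (one_t b)))) =
            slice_r \<phi> (as2 (mmul (one_t a) (\<Delta> b))))"

definition alg_quantum_hypergroup ::
    "('a::calg \<Rightarrow> 'a m2) \<Rightarrow> ('a \<Rightarrow> complex) \<Rightarrow> ('a \<Rightarrow> 'a) \<Rightarrow> bool" where
  "alg_quantum_hypergroup \<Delta> \<epsilon> S \<longleftrightarrow> nondegenerate TYPE('a) \<and> regular_comult \<Delta> \<and> counit \<Delta> \<epsilon> \<and>
     (\<exists>\<phi>. left_integral \<Delta> \<phi> \<and> faithful \<phi> \<and> antipode \<Delta> \<phi> S)"

section \<open>The anti-automorphism \<zeta>\<circ>(S\<otimes>S) of A\<otimes>A and its extension to M(A\<otimes>A)\<close>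

definition flipSS :: "('a::calg \<Rightarrow> 'a) \<Rightarrow> 'a t2 \<Rightarrow> 'a t2" where
  "flipSS S T = (\<lambda>\<beta>. g2 \<beta> (T (\<lambda>a b. \<beta> (S b) (S a))))"

text \<open>Extension to multipliers: \<Theta>(m)\<Theta>(y) = \<Theta>(y m) and \<Theta>(y)\<Theta>(m) = \<Theta>(m y),
  where \<Theta> = flipSS S is bijective on A\<otimes>A with inverse flipSS (inv S).\<close>
definition flipSS_M :: "('a::calg \<Rightarrow> 'a) \<Rightarrow> 'a m2 \<Rightarrow> 'a m2" where
  "flipSS_M S m = (\<lambda>u. flipSS S (snd m (flipSS (inv S) u)),
                   \<lambda>u. flipSS S (fst m (flipSS (inv S) u)))"

end

theory Submission
  imports Defs
begin

(* Both identities are linear in x, so it suffices to check them on a spanning set. The elements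
   R(a, b) = (\<iota> \<otimes> \<phi>)(\<Delta>(a)(1 \<otimes> b)) span A, and the antipode axiom says
   S R(a, b) = (\<iota> \<otimes> \<phi>)((1 \<otimes> a)\<Delta>(b)). Applying \<epsilon> to either side gives \<phi>(ab) by the counit
   property, which settles \<epsilon> \<circ> S = \<epsilon>. For \<Delta>, elements of A \<otimes> A are compared through their
   values on product functionals f \<otimes> g, and by nondegeneracy it suffices to test on translated
   functionals; moving the multipliers around with coassociativity and S(xy) = S(y)S(x) turns
   (f \<otimes> g)(\<Delta>(S R(a, b))(c \<otimes> d)) into (g \<circ> S \<otimes> f \<circ> S)((S\<^sup>-\<^sup>1 d \<otimes> S\<^sup>-\<^sup>1 c)\<Delta>(R(a, b))). *)

interpretation cvs: vector_space "cscale :: complex \<Rightarrow> 'a::calg \<Rightarrow> 'a"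
  by unfold_locales (auto simp: cs_add_right cs_add_left cs_assoc cs_one)

lemma vector_space_complex_mult: "vector_space ((*) :: complex \<Rightarrow> complex \<Rightarrow> complex)"
  by unfold_locales (auto simp: algebra_simps)

interpretation cvs_pair:
  vector_space_pair "cscale :: complex \<Rightarrow> 'a::calg \<Rightarrow> 'a" "(*) :: complex \<Rightarrow> complex \<Rightarrow> complex"
  by (simp add: vector_space_pair_def cvs.vector_space_axioms vector_space_complex_mult)

section \<open>Linear functionals\<close>

lemma cfun_add: "cfun f \<Longrightarrow> f (x + y) = f x + f y"
  and cfun_scale: "cfun f \<Longrightarrow> f (cscale c x) = c * f x"
  by (auto simp: cfun_def)

lemma cfun_zero: "cfun f \<Longrightarrow> f 0 = 0"
  using cfun_add[of f 0 0] by simp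

lemma cfun_neg: "cfun f \<Longrightarrow> f (- x) = - f x"
  using cfun_add[of f x "-x"] cfun_zero[of f] by (simp add: eq_neg_iff_add_eq_0 add.commute)

lemma cfun_diff: "cfun f \<Longrightarrow> f (x - y) = f x - f y"
  using cfun_add[of f x "-y"] cfun_neg[of f y] by simp

lemma cfun_sum: "cfun f \<Longrightarrow> f (sum g I) = (\<Sum>i\<in>I. f (g i))"
  by (induction I rule: infinite_finite_induct) (auto simp: cfun_zero cfun_add)

lemma cfun_cmult: "cfun f \<Longrightarrow> cfun (\<lambda>x. c * f x)"
  unfolding cfun_def by (simp add: distrib_left)

lemma cfun_multc: "cfun f \<Longrightarrow> cfun (\<lambda>x. f x * c)"
  unfolding cfun_def by (simp add: distrib_right)

lemma cfun_sumI: "finite I \<Longrightarrow> (\<And>i. i \<in> I \<Longrightarrow> cfun (f i)) \<Longrightarrow> cfun (\<lambda>x. \<Sum>i\<in>I. f i x)"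
  unfolding cfun_def by (simp add: sum.distrib sum_distrib_left)

lemma cfun_iff_linear: "cfun f \<longleftrightarrow> Vector_Spaces.linear cscale ((*) :: complex \<Rightarrow> complex \<Rightarrow> complex) f"
  by (simp add: Vector_Spaces.linear_iff cfun_def cvs.vector_space_axioms vector_space_complex_mult)

lemma cfun_vanishes_on_span:
  assumes "cfun g" "\<forall>y\<in>B. g y = 0" "x \<in> cvs.span B"
  shows "g x = 0"
  using assms(3)
proof (induction rule: cvs.span_induct_alt)
  case base then show ?case using cfun_zero[OF assms(1)] by simp
next
  case (step c x y) then show ?case using assms(1,2) by (simp add: cfun_add cfun_scale)
qed

lemma cfun_separates_span:
  fixes x :: "'a::calg"
  assumes "x \<notin> cvs.span G"
  shows "\<exists>\<omega>. cfun \<omega> \<and> (\<forall>y\<in>cvs.span G. \<omega> y = 0) \<and> \<omega> x = 1"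
proof -
  obtain B where B: "B \<subseteq> G" "cvs.independent B" "G \<subseteq> cvs.span B"
    by (rule cvs.maximal_independent_subset)
  have span_G: "cvs.span G \<subseteq> cvs.span B"
    using B(3) cvs.span_mono cvs.span_span by blast
  then have "x \<notin> cvs.span B" using assms B(1) cvs.span_mono by blast
  then have "cvs.independent (insert x B)" using B(2) cvs.independent_insertI by blast
  then obtain g where g: "Vector_Spaces.linear cscale ((*) :: complex \<Rightarrow> complex \<Rightarrow> complex) g"
      "\<forall>z\<in>insert x B. g z = (if z = x then 1 else 0)"
    using cvs_pair.linear_independent_extend[of _ "\<lambda>z. if z = x then 1 else 0"] by blast
  have cfun_g: "cfun g" using g(1) cfun_iff_linear by blast
  have "x \<notin> B" using \<open>x \<notin> cvs.span B\<close> cvs.span_base by blast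
  then have "\<forall>y\<in>B. g y = 0" using g(2) by auto
  then have "\<forall>y\<in>cvs.span G. g y = 0" using cfun_vanishes_on_span[OF cfun_g] span_G by blast
  then show ?thesis using cfun_g g(2) by auto
qed

lemma zero_if_all_cfun_vanish:
  fixes x :: "'a::calg"
  assumes "\<And>g. cfun g \<Longrightarrow> g x = 0" shows "x = 0"
proof (rule ccontr)
  assume "x \<noteq> 0"
  then have "x \<notin> cvs.span {}" by simp
  then obtain \<omega> where "cfun \<omega>" "\<omega> x = 1" using cfun_separates_span by blast
  then show False using assms by force
qed

lemma eq_if_all_cfun_eq:
  fixes x y :: "'a::calg"
  assumes "\<And>g. cfun g \<Longrightarrow> g x = g y" shows "x = y"
  using zero_if_all_cfun_vanish[of "x - y"] assms by (simp add: cfun_diff)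

lemma clin_add: "clin S \<Longrightarrow> S (x + y) = S x + S y"
  and clin_scale: "clin S \<Longrightarrow> S (cscale c x) = cscale c (S x)"
  by (auto simp: clin_def)

lemma clin_zero: "clin S \<Longrightarrow> S 0 = 0"
  using clin_scale[of S 0 0] by simp

lemma clin_inv:
  fixes S :: "'a::calg \<Rightarrow> 'a"
  assumes "bij S" "clin S" shows "clin (inv S)"
proof -
  have S_inv: "S (inv S x) = x" and inv_S: "inv S (S x) = x" for x
    using assms(1) by (simp_all add: bij_is_surj surj_f_inv_f bij_is_inj)
  show ?thesis unfolding clin_def
  proof (intro conjI allI)
    fix x y show "inv S (x + y) = inv S x + inv S y"
      using inv_S[of "inv S x + inv S y"] by (simp add: clin_add[OF assms(2)] S_inv)
  next
    fix c x show "inv S (cscale c x) = cscale c (inv S x)"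
      using inv_S[of "cscale c (inv S x)"] by (simp add: clin_scale[OF assms(2)] S_inv)
  qed
qed

lemma cfun_compose_clin: "cfun f \<Longrightarrow> clin S \<Longrightarrow> cfun (\<lambda>x. f (S x))"
  unfolding cfun_def by (simp add: clin_add clin_scale)

definition rtrans :: "('a::calg \<Rightarrow> complex) \<Rightarrow> 'a \<Rightarrow> 'a \<Rightarrow> complex" where
  "rtrans f u = (\<lambda>x. f (x * u))"

definition ltrans :: "'a::calg \<Rightarrow> ('a \<Rightarrow> complex) \<Rightarrow> 'a \<Rightarrow> complex" where
  "ltrans u f = (\<lambda>x. f (u * x))"

lemma rtrans_apply [simp]: "rtrans f u x = f (x * u)" by (simp add: rtrans_def)
lemma ltrans_apply [simp]: "ltrans u f x = f (u * x)" by (simp add: ltrans_def)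

lemma cfun_rtrans [simp]: "cfun f \<Longrightarrow> cfun (rtrans f u)"
  unfolding cfun_def by (auto simp: distrib_right cs_mult_left)

lemma cfun_ltrans [simp]: "cfun f \<Longrightarrow> cfun (ltrans u f)"
  unfolding cfun_def by (auto simp: distrib_left cs_mult_right)

lemma cfun_rmult [simp]: "cfun f \<Longrightarrow> cfun (\<lambda>x. f (x * u))"
  using cfun_rtrans[of f u] by (simp add: rtrans_def)

lemma cfun_lmult [simp]: "cfun f \<Longrightarrow> cfun (\<lambda>x. f (u * x))"
  using cfun_ltrans[of f u] by (simp add: ltrans_def)

lemma rtrans_rtrans: "rtrans (rtrans f u) v = rtrans f (v * u)"
  by (simp add: rtrans_def mult.assoc)

lemma ltrans_rtrans: "ltrans u (rtrans f v) = rtrans (ltrans u f) v"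
  by (simp add: ltrans_def rtrans_def mult.assoc)

lemma rtrans_add: "cfun f \<Longrightarrow> rtrans f (u + v) = (\<lambda>x. rtrans f u x + rtrans f v x)"
  by (rule ext) (simp add: distrib_left cfun_add)

lemma rtrans_scale: "cfun f \<Longrightarrow> rtrans f (cscale c u) = (\<lambda>x. c * rtrans f u x)"
  by (rule ext) (simp add: cs_mult_right cfun_scale)

lemma nondegenerate_rmult_zero:
  assumes "nondegenerate TYPE('a::calg)" "\<And>u F. cfun F \<Longrightarrow> F ((s::'a) * u) = 0"
  shows "s = 0"
  using assms zero_if_all_cfun_vanish unfolding nondegenerate_def by blast

lemma nondegenerate_lmult_zero:
  assumes "nondegenerate TYPE('a::calg)" "\<And>u F. cfun F \<Longrightarrow> F (u * (s::'a)) = 0"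
  shows "s = 0"
  using assms zero_if_all_cfun_vanish unfolding nondegenerate_def by blast

section \<open>Bilinear forms and the tensor square\<close>

lemma bilI: "(\<And>a. cfun (\<beta> a)) \<Longrightarrow> (\<And>b. cfun (\<lambda>a. \<beta> a b)) \<Longrightarrow> bil \<beta>"
  by (simp add: bil_def)

lemma bil_cfun1: "bil \<beta> \<Longrightarrow> cfun (\<lambda>x. \<beta> x y)"
  and bil_cfun2: "bil \<beta> \<Longrightarrow> cfun (\<beta> x)"
  by (simp_all add: bil_def)

lemma bil_product: "cfun f \<Longrightarrow> cfun g \<Longrightarrow> bil (\<lambda>u v. f u * g v)"
  by (rule bilI) (simp_all add: cfun_cmult cfun_multc)

lemma bil_cmult: "bil \<beta> \<Longrightarrow> bil (\<lambda>x y. c * \<beta> x y)"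
  and bil_multc: "bil \<beta> \<Longrightarrow> bil (\<lambda>x y. \<beta> x y * c)"
  by (simp_all add: bil_def cfun_cmult cfun_multc)

lemma bil_sum: "finite I \<Longrightarrow> (\<And>i. i \<in> I \<Longrightarrow> bil (\<beta> i)) \<Longrightarrow> bil (\<lambda>x y. \<Sum>i\<in>I. \<beta> i x y)"
  unfolding bil_def by (auto intro!: cfun_sumI)

lemma bil_lmult1: "bil \<beta> \<Longrightarrow> bil (\<lambda>x z. \<beta> (b * x) z)"
  and bil_lmult2: "bil \<beta> \<Longrightarrow> bil (\<lambda>x z. \<beta> x (b * z))"
  unfolding bil_def cfun_def by (simp_all add: distrib_left cs_mult_right)

lemma bil_flip:
  assumes "bil \<beta>" "clin S" shows "bil (\<lambda>a b. \<beta> (S b) (S a))"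
proof (rule bilI)
  fix a show "cfun (\<lambda>b. \<beta> (S b) (S a))"
    using cfun_compose_clin[OF bil_cfun1[OF assms(1)] assms(2)] .
next
  fix b show "cfun (\<lambda>a. \<beta> (S b) (S a))"
    using cfun_compose_clin[OF bil_cfun2[OF assms(1)] assms(2)] .
qed

lemma tril_product: "cfun f \<Longrightarrow> cfun g \<Longrightarrow> cfun h \<Longrightarrow> tril (\<lambda>x y z. f x * g y * h z)"
  unfolding tril_def by (simp add: cfun_cmult cfun_multc)

lemma tril_lmult3: "tril \<gamma> \<Longrightarrow> tril (\<lambda>x y z. \<gamma> x y (c * z))"
  unfolding tril_def cfun_def by (simp add: distrib_left cs_mult_right)

definition tensor_sum :: "'i set \<Rightarrow> ('i \<Rightarrow> 'a::calg) \<Rightarrow> ('i \<Rightarrow> 'a) \<Rightarrow> 'a t2" where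
  "tensor_sum I a b = (\<lambda>\<beta>. if bil \<beta> then (\<Sum>i\<in>I. \<beta> (a i) (b i)) else 0)"

lemma tp_eq_tensor_sum: "tp u v = tensor_sum {()} (\<lambda>_. u) (\<lambda>_. v)"
  by (auto simp: tp_def tensor_sum_def g2_def)

lemma T2_tensor_sum:
  assumes "Z \<in> T2" shows "\<exists>n a b. Z = tensor_sum {..<(n::nat)} a b"
proof -
  obtain n a b where "Z = (\<lambda>\<beta>. \<Sum>i<(n::nat). tp (a i) (b i) \<beta>)"
    using assms unfolding T2_def by blast
  then have "Z = tensor_sum {..<n} a b"
    by (simp add: fun_eq_iff tensor_sum_def tp_def g2_def)
  then show ?thesis by blast
qed

lemma tensor_sum_in_T2:
  assumes "finite I" shows "tensor_sum I a b \<in> T2"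
proof -
  obtain h where h: "bij_betw h {..<card I} I"
    using ex_bij_betw_nat_finite[OF assms] by (auto simp: atLeast0LessThan)
  have "tensor_sum I a b = (\<lambda>\<beta>. \<Sum>k<card I. tp (a (h k)) (b (h k)) \<beta>)"
    by (simp add: fun_eq_iff tensor_sum_def tp_def g2_def sum.reindex_bij_betw[OF h, symmetric])
  then show ?thesis unfolding T2_def
    by (intro CollectI exI[of _ "card I"] exI[of _ "\<lambda>k. a (h k)"] exI[of _ "\<lambda>k. b (h k)"])
qed

lemma tp_in_T2 [simp]: "tp u v \<in> T2"
  by (simp add: tp_eq_tensor_sum tensor_sum_in_T2)

lemma T2_bil_cmult: "Z \<in> T2 \<Longrightarrow> bil \<beta> \<Longrightarrow> Z (\<lambda>x y. c * \<beta> x y) = c * Z \<beta>"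
  and T2_bil_multc: "Z \<in> T2 \<Longrightarrow> bil \<beta> \<Longrightarrow> Z (\<lambda>x y. \<beta> x y * c) = Z \<beta> * c"
  by (auto dest!: T2_tensor_sum simp: tensor_sum_def bil_cmult bil_multc
      sum_distrib_left sum_distrib_right)

lemma T2_bil_sum:
  assumes "Z \<in> T2" "finite I" "\<And>i. i \<in> I \<Longrightarrow> bil (\<beta> i)"
  shows "Z (\<lambda>x y. \<Sum>i\<in>I. \<beta> i x y) = (\<Sum>i\<in>I. Z (\<beta> i))"
proof -
  obtain n a b where Z: "Z = tensor_sum {..<(n::nat)} a b" using T2_tensor_sum[OF assms(1)] by blast
  have "(\<Sum>j<n. \<Sum>i\<in>I. \<beta> i (a j) (b j)) = (\<Sum>i\<in>I. \<Sum>j<n. \<beta> i (a j) (b j))" by (rule sum.swap)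
  then show ?thesis using bil_sum[OF assms(2,3)] assms(3) by (simp add: Z tensor_sum_def)
qed

definition teval :: "'a::calg t2 \<Rightarrow> ('a \<Rightarrow> complex) \<Rightarrow> ('a \<Rightarrow> complex) \<Rightarrow> complex" where
  "teval Z f g = Z (\<lambda>u v. f u * g v)"

lemma teval_tensor_sum:
  "cfun f \<Longrightarrow> cfun g \<Longrightarrow> teval (tensor_sum I a b) f g = (\<Sum>i\<in>I. f (a i) * g (b i))"
  by (simp add: teval_def tensor_sum_def bil_product)

lemma teval_addt: "teval (addt Z Z') f g = teval Z f g + teval Z' f g"
  by (simp add: teval_def addt_def)

lemma teval_scalet: "teval (scalet c Z) f g = c * teval Z f g"
  by (simp add: teval_def scalet_def)

lemma teval_teval_interchange:
  assumes Z1: "Z1 \<in> T2" and Z2: "Z2 \<in> T2" and f: "cfun f" and g: "cfun g" and h: "cfun h"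
  shows "teval Z1 f (\<lambda>q. teval Z2 g (rtrans h q)) = teval Z2 g (\<lambda>p. teval Z1 f (ltrans p h))"
proof -
  obtain n a b where 1: "Z1 = tensor_sum {..<(n::nat)} a b" using T2_tensor_sum[OF Z1] by blast
  obtain m c d where 2: "Z2 = tensor_sum {..<(m::nat)} c d" using T2_tensor_sum[OF Z2] by blast
  have "teval Z1 f (\<lambda>q. teval Z2 g (rtrans h q)) = (\<Sum>i<n. f (a i) * (\<Sum>k<m. g (c k) * h (d k * b i)))"
    by (simp add: 1 2 teval_tensor_sum f g h cfun_sumI cfun_cmult)
  also have "\<dots> = (\<Sum>i<n. \<Sum>k<m. g (c k) * (f (a i) * h (d k * b i)))"
    by (simp only: sum_distrib_left mult.left_commute)
  also have "\<dots> = (\<Sum>k<m. \<Sum>i<n. g (c k) * (f (a i) * h (d k * b i)))"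
    by (rule sum.swap)
  also have "\<dots> = teval Z2 g (\<lambda>p. teval Z1 f (ltrans p h))"
    by (simp add: 1 2 teval_tensor_sum f g h cfun_sumI cfun_cmult sum_distrib_left)
  finally show ?thesis .
qed

text \<open>Tensors are determined by their values on product functionals: expand the first legs in a
  Hamel basis and use that functionals separate points in the second leg.\<close>

lemma bil_sum_eq_0_if_product_sums_eq_0:
  fixes a b :: "'i \<Rightarrow> 'a::calg"
  assumes fin: "finite I"
    and h: "\<And>f g. cfun f \<Longrightarrow> cfun g \<Longrightarrow> (\<Sum>i\<in>I. f (a i) * g (b i)) = 0"
    and \<beta>: "bil \<beta>"
  shows "(\<Sum>i\<in>I. \<beta> (a i) (b i)) = 0"
proof -
  obtain E :: "'a set" where E: "cvs.independent E" "UNIV \<subseteq> cvs.span E"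
    using cvs.maximal_independent_subset[of UNIV] by blast
  define co where "co e x = cvs.representation E x e" for e x
  have in_span: "x \<in> cvs.span E" for x using E(2) by blast
  have cfun_co: "cfun (co e)" for e
    unfolding cfun_def co_def
    by (simp add: cvs.representation_add[OF E(1) in_span in_span] cvs.representation_scale[OF E(1) in_span])
  define E' where "E' = (\<Union>i\<in>I. {e. co e (a i) \<noteq> 0})"
  have fin_E': "finite E'" unfolding E'_def co_def using fin cvs.finite_representation by blast
  have expand: "a i = (\<Sum>e\<in>E'. cscale (co e (a i)) e)" if "i \<in> I" for i
  proof -
    have "(\<Sum>e\<in>E'. cscale (co e (a i)) e) = (\<Sum>e | co e (a i) \<noteq> 0. cscale (co e (a i)) e)"
      by (rule sum.mono_neutral_right[OF fin_E']) (use that in \<open>auto simp: E'_def\<close>)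
    also have "\<dots> = a i" unfolding co_def by (rule cvs.sum_nonzero_representation_eq[OF E(1) in_span])
    finally show ?thesis by simp
  qed
  have coeff_sum: "(\<Sum>i\<in>I. cscale (co e (a i)) (b i)) = 0" for e
  proof (rule zero_if_all_cfun_vanish)
    fix g :: "'a \<Rightarrow> complex" assume g: "cfun g"
    show "g (\<Sum>i\<in>I. cscale (co e (a i)) (b i)) = 0"
      using h[OF cfun_co g] by (simp add: cfun_sum[OF g] cfun_scale[OF g])
  qed
  have "(\<Sum>i\<in>I. \<beta> (a i) (b i)) = (\<Sum>i\<in>I. \<Sum>e\<in>E'. co e (a i) * \<beta> e (b i))"
  proof (rule sum.cong[OF refl])
    fix i assume "i \<in> I"
    then have "\<beta> (a i) (b i) = \<beta> (\<Sum>e\<in>E'. cscale (co e (a i)) e) (b i)" using expand by simp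
    then show "\<beta> (a i) (b i) = (\<Sum>e\<in>E'. co e (a i) * \<beta> e (b i))"
      by (simp add: cfun_sum[OF bil_cfun1[OF \<beta>]] cfun_scale[OF bil_cfun1[OF \<beta>]])
  qed
  also have "\<dots> = (\<Sum>e\<in>E'. \<Sum>i\<in>I. co e (a i) * \<beta> e (b i))" by (rule sum.swap)
  also have "\<dots> = (\<Sum>e\<in>E'. \<beta> e (\<Sum>i\<in>I. cscale (co e (a i)) (b i)))"
    by (simp add: cfun_sum[OF bil_cfun2[OF \<beta>]] cfun_scale[OF bil_cfun2[OF \<beta>]])
  also have "\<dots> = 0" using coeff_sum cfun_zero[OF bil_cfun2[OF \<beta>]] by simp
  finally show ?thesis .
qed

lemma T2_eqI:
  fixes Z1 Z2 :: "'a::calg t2"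
  assumes "Z1 \<in> T2" "Z2 \<in> T2" "\<And>f g. cfun f \<Longrightarrow> cfun g \<Longrightarrow> teval Z1 f g = teval Z2 f g"
  shows "Z1 = Z2"
proof
  fix \<beta> :: "'a \<Rightarrow> 'a \<Rightarrow> complex"
  obtain n1 a1 b1 where 1: "Z1 = tensor_sum {..<(n1::nat)} a1 b1" using T2_tensor_sum[OF assms(1)] by blast
  obtain n2 a2 b2 where 2: "Z2 = tensor_sum {..<(n2::nat)} a2 b2" using T2_tensor_sum[OF assms(2)] by blast
  define I where "I = {..<n1} <+> {..<n2}"
  define a where "a = case_sum a1 a2"
  define b where "b = case_sum b1 (\<lambda>i. - b2 i)"
  have split: "(\<Sum>i\<in>I. \<gamma> (a i) (b i)) = (\<Sum>i<n1. \<gamma> (a1 i) (b1 i)) - (\<Sum>i<n2. \<gamma> (a2 i) (b2 i))"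
    if "\<And>x. cfun (\<gamma> x)" for \<gamma> :: "'a \<Rightarrow> 'a \<Rightarrow> complex"
    by (simp add: I_def a_def b_def sum.Plus cfun_neg[OF that] sum_negf)
  have products: "(\<Sum>i\<in>I. f (a i) * g (b i)) = 0" if f: "cfun f" and g: "cfun g" for f g
  proof -
    have "(\<Sum>i\<in>I. f (a i) * g (b i)) = teval Z1 f g - teval Z2 f g"
      using split[of "\<lambda>x y. f x * g y", OF cfun_cmult[OF g]] by (simp add: 1 2 teval_tensor_sum f g)
    then show ?thesis using assms(3)[OF f g] by simp
  qed
  show "Z1 \<beta> = Z2 \<beta>"
  proof (cases "bil \<beta>")
    case True
    then have "(\<Sum>i\<in>I. \<beta> (a i) (b i)) = 0"
      using bil_sum_eq_0_if_product_sums_eq_0[OF _ products] by (simp add: I_def)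
    then show ?thesis using split[of \<beta>, OF bil_cfun2[OF True]] True by (simp add: 1 2 tensor_sum_def)
  qed (simp add: 1 2 tensor_sum_def)
qed

section \<open>Forms on pairs of functionals given by tensors\<close>

definition tensor_form :: "(('a::calg \<Rightarrow> complex) \<Rightarrow> ('a \<Rightarrow> complex) \<Rightarrow> complex) \<Rightarrow> bool" where
  "tensor_form B \<longleftrightarrow>
     (\<exists>n a b. \<forall>F G. cfun F \<longrightarrow> cfun G \<longrightarrow> B F G = (\<Sum>i<(n::nat). F (a i) * G (b i)))"

lemma tensor_formI:
  fixes I :: "'i set" and B :: "('a::calg \<Rightarrow> complex) \<Rightarrow> ('a \<Rightarrow> complex) \<Rightarrow> complex"
  assumes "finite I" "\<And>F G. cfun F \<Longrightarrow> cfun G \<Longrightarrow> B F G = (\<Sum>i\<in>I. F (a i) * G (b i))"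
  shows "tensor_form B"
proof -
  obtain h where h: "bij_betw h {..<card I} I"
    using ex_bij_betw_nat_finite[OF assms(1)] by (auto simp: atLeast0LessThan)
  have "\<forall>F G. cfun F \<longrightarrow> cfun G \<longrightarrow> B F G = (\<Sum>k<card I. F (a (h k)) * G (b (h k)))"
    using assms(2) by (simp add: sum.reindex_bij_betw[OF h, symmetric])
  then show ?thesis unfolding tensor_form_def
    by (intro exI[of _ "card I"] exI[of _ "\<lambda>k. a (h k)"] exI[of _ "\<lambda>k. b (h k)"])
qed

lemma tensor_form_teval:
  assumes "Z \<in> T2" shows "tensor_form (teval Z)"
proof -
  obtain n a b where "Z = tensor_sum {..<(n::nat)} a b" using T2_tensor_sum[OF assms] by blast
  then show ?thesis by (intro tensor_formI[of "{..<n}" _ a b]) (simp_all add: teval_tensor_sum)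
qed

lemma tensor_form_cong:
  "tensor_form B \<Longrightarrow> (\<And>F G. cfun F \<Longrightarrow> cfun G \<Longrightarrow> B' F G = B F G) \<Longrightarrow> tensor_form B'"
  unfolding tensor_form_def by metis

lemma tensor_form_swap:
  assumes "tensor_form B" shows "tensor_form (\<lambda>F G. B G F)"
proof -
  obtain n a b where B_eq: "\<And>F G. cfun F \<Longrightarrow> cfun G \<Longrightarrow> B F G = (\<Sum>i<(n::nat). F (a i) * G (b i))"
    using assms unfolding tensor_form_def by blast
  show ?thesis by (rule tensor_formI[of "{..<n}" _ b a]) (simp_all add: B_eq mult.commute)
qed

lemma tensor_form_add:
  assumes "tensor_form B1" "tensor_form B2" shows "tensor_form (\<lambda>F G. B1 F G + B2 F G)"
proof -
  obtain n1 a1 b1 where 1: "\<And>F G. cfun F \<Longrightarrow> cfun G \<Longrightarrow> B1 F G = (\<Sum>i<(n1::nat). F (a1 i) * G (b1 i))"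
    using assms(1) unfolding tensor_form_def by blast
  obtain n2 a2 b2 where 2: "\<And>F G. cfun F \<Longrightarrow> cfun G \<Longrightarrow> B2 F G = (\<Sum>i<(n2::nat). F (a2 i) * G (b2 i))"
    using assms(2) unfolding tensor_form_def by blast
  show ?thesis
    by (rule tensor_formI[of "{..<n1} <+> {..<n2}" _ "case_sum a1 a2" "case_sum b1 b2"])
       (simp_all add: 1 2 sum.Plus comp_def)
qed

lemma tensor_form_cmult:
  assumes "tensor_form B" shows "tensor_form (\<lambda>F G. c * B F G)"
proof -
  obtain n a b where B_eq: "\<And>F G. cfun F \<Longrightarrow> cfun G \<Longrightarrow> B F G = (\<Sum>i<(n::nat). F (a i) * G (b i))"
    using assms unfolding tensor_form_def by blast
  show ?thesis
    by (rule tensor_formI[of "{..<n}" _ "\<lambda>i. cscale c (a i)" b])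
       (simp_all add: B_eq sum_distrib_left cfun_scale)
qed

lemma tensor_form_diff:
  assumes "tensor_form B1" "tensor_form B2" shows "tensor_form (\<lambda>F G. B1 F G - B2 F G)"
  using tensor_form_add[OF assms(1) tensor_form_cmult[OF assms(2), of "-1"]] by simp

lemma tensor_form_sum:
  "finite J \<Longrightarrow> (\<And>j. j \<in> J \<Longrightarrow> tensor_form (B j)) \<Longrightarrow> tensor_form (\<lambda>F G. \<Sum>j\<in>J. B j F G)"
proof (induction J rule: finite_induct)
  case empty show ?case by (rule tensor_formI[of "{}"]) simp_all
next
  case (insert x J) then show ?case by (simp add: tensor_form_add)
qed

lemma tensor_form_compose1:
  assumes B: "tensor_form B" and c: "\<And>G. cfun G \<Longrightarrow> cfun (T G)"
    and l: "\<And>m. \<exists>s. \<forall>G. cfun G \<longrightarrow> T G m = G s"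
  shows "tensor_form (\<lambda>G H. B (T G) H)"
proof -
  obtain t where t: "\<And>m G. cfun G \<Longrightarrow> T G m = G (t m)" using l by metis
  obtain n a b where B_eq: "\<And>F G. cfun F \<Longrightarrow> cfun G \<Longrightarrow> B F G = (\<Sum>i<(n::nat). F (a i) * G (b i))"
    using B unfolding tensor_form_def by blast
  show ?thesis
    by (rule tensor_formI[of "{..<n}" _ "\<lambda>i. t (a i)" b]) (simp_all add: B_eq c t)
qed

lemma tensor_form_compose2:
  assumes "tensor_form B" "\<And>H. cfun H \<Longrightarrow> cfun (T H)"
    and "\<And>m. \<exists>s. \<forall>H. cfun H \<longrightarrow> T H m = H s"
  shows "tensor_form (\<lambda>G H. B G (T H))"
  using tensor_form_swap[OF tensor_form_compose1[OF tensor_form_swap[OF assms(1)] assms(2,3)]] .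

lemma tensor_form_compose_inner1:
  assumes B: "tensor_form B" and H0: "cfun H0" and K: "\<And>m. tensor_form (K m)"
    and c: "\<And>G H. cfun G \<Longrightarrow> cfun H \<Longrightarrow> cfun (\<lambda>m. K m G H)"
  shows "tensor_form (\<lambda>G H. B (\<lambda>m. K m G H) H0)"
proof -
  obtain n a b where B_eq: "\<And>F G. cfun F \<Longrightarrow> cfun G \<Longrightarrow> B F G = (\<Sum>i<(n::nat). F (a i) * G (b i))"
    using B unfolding tensor_form_def by blast
  have "tensor_form (\<lambda>G H. \<Sum>i<n. H0 (b i) * K (a i) G H)"
    by (rule tensor_form_sum) (auto intro: tensor_form_cmult K)
  then show ?thesis by (rule tensor_form_cong) (simp add: B_eq H0 c mult.commute)
qed

lemma tensor_form_compose_inner2: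
  assumes "tensor_form B" "cfun F0" "\<And>m. tensor_form (K m)"
    and "\<And>G H. cfun G \<Longrightarrow> cfun H \<Longrightarrow> cfun (\<lambda>m. K m G H)"
  shows "tensor_form (\<lambda>G H. B F0 (\<lambda>m. K m G H))"
  using tensor_form_compose_inner1[OF tensor_form_swap[OF assms(1)] assms(2-4)] .

lemma tensor_form_rtrans1: "tensor_form B \<Longrightarrow> tensor_form (\<lambda>F G. B (rtrans F u) G)"
  by (rule tensor_form_compose1[where T = "\<lambda>F. rtrans F u"]) (simp_all, blast)

lemma tensor_form_ltrans1: "tensor_form B \<Longrightarrow> tensor_form (\<lambda>F G. B (ltrans u F) G)"
  by (rule tensor_form_compose1[where T = "ltrans u"]) (simp_all, blast)

lemma tensor_form_rtrans2: "tensor_form B \<Longrightarrow> tensor_form (\<lambda>F G. B F (rtrans G u))"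
  by (rule tensor_form_compose2[where T = "\<lambda>F. rtrans F u"]) (simp_all, blast)

lemma tensor_form_ltrans2: "tensor_form B \<Longrightarrow> tensor_form (\<lambda>F G. B F (ltrans u G))"
  by (rule tensor_form_compose2[where T = "ltrans u"]) (simp_all, blast)

lemma tensor_form_flip_clin:
  fixes S :: "'a::calg \<Rightarrow> 'a"
  assumes "tensor_form B" "clin S"
  shows "tensor_form (\<lambda>F G. B (\<lambda>x. G (S x)) (\<lambda>x. F (S x)))"
proof -
  have cfun_S: "\<And>H. cfun H \<Longrightarrow> cfun (\<lambda>x. H (S x))" by (rule cfun_compose_clin[OF _ assms(2)])
  have eval_S: "\<And>m. \<exists>s. \<forall>H. cfun H \<longrightarrow> H (S m) = H s" by blast
  show ?thesis
    by (rule tensor_form_swap[OF tensor_form_compose1[where T = "\<lambda>H x. H (S x)",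
          OF tensor_form_compose2[where T = "\<lambda>H x. H (S x)", OF assms(1) cfun_S eval_S] cfun_S eval_S]])
qed

lemma tensor_form_slice1:
  assumes "tensor_form B" "cfun H" shows "\<exists>s. \<forall>F. cfun F \<longrightarrow> B F H = F s"
proof -
  obtain n a b where B_eq: "\<And>F G. cfun F \<Longrightarrow> cfun G \<Longrightarrow> B F G = (\<Sum>i<(n::nat). F (a i) * G (b i))"
    using assms(1) unfolding tensor_form_def by blast
  show ?thesis
    by (rule exI[of _ "\<Sum>i<n. cscale (H (b i)) (a i)"]) (simp add: B_eq assms(2) cfun_sum cfun_scale mult.commute)
qed

lemma tensor_form_slice2:
  "tensor_form B \<Longrightarrow> cfun H \<Longrightarrow> \<exists>s. \<forall>G. cfun G \<longrightarrow> B H G = G s"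
  using tensor_form_slice1[OF tensor_form_swap] .

lemma tensor_form_add2:
  assumes "tensor_form B" "cfun F" "cfun G1" "cfun G2"
  shows "B F (\<lambda>x. G1 x + G2 x) = B F G1 + B F G2"
proof -
  obtain n a b where B_eq: "\<And>F G. cfun F \<Longrightarrow> cfun G \<Longrightarrow> B F G = (\<Sum>i<(n::nat). F (a i) * G (b i))"
    using assms(1) unfolding tensor_form_def by blast
  have "cfun (\<lambda>x. G1 x + G2 x)" using assms(3,4) unfolding cfun_def by (simp add: distrib_left)
  then show ?thesis using assms(2-4) by (simp add: B_eq sum.distrib distrib_left)
qed

lemma tensor_form_add1:
  assumes "tensor_form B" "cfun F1" "cfun F2" "cfun G"
  shows "B (\<lambda>x. F1 x + F2 x) G = B F1 G + B F2 G"
  using tensor_form_add2[OF tensor_form_swap[OF assms(1)] assms(4,2,3)] by simp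

lemma tensor_form_cmult2:
  assumes "tensor_form B" "cfun F" "cfun G"
  shows "B F (\<lambda>x. c * G x) = c * B F G"
proof -
  obtain n a b where B_eq: "\<And>F G. cfun F \<Longrightarrow> cfun G \<Longrightarrow> B F G = (\<Sum>i<(n::nat). F (a i) * G (b i))"
    using assms(1) unfolding tensor_form_def by blast
  have "B F (\<lambda>x. c * G x) = (\<Sum>i<n. F (a i) * (c * G (b i)))"
    using B_eq[OF assms(2) cfun_cmult[OF assms(3)]] .
  also have "\<dots> = c * B F G" by (simp only: B_eq[OF assms(2,3)] sum_distrib_left mult.left_commute)
  finally show ?thesis .
qed

lemma tensor_form_cmult1:
  assumes "tensor_form B" "cfun F" "cfun G"
  shows "B (\<lambda>x. c * F x) G = c * B F G"
  using tensor_form_cmult2[OF tensor_form_swap[OF assms(1)] assms(3,2)] by simp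

lemma tensor_form_eq_rtrans1:
  assumes nd: "nondegenerate TYPE('a::calg)"
    and B: "tensor_form (B1 :: ('a \<Rightarrow> complex) \<Rightarrow> _)" "tensor_form B2"
    and eq: "\<And>F G u. cfun F \<Longrightarrow> cfun G \<Longrightarrow> B1 (rtrans F u) G = B2 (rtrans F u) G"
    and F: "cfun F" and G: "cfun G"
  shows "B1 F G = B2 F G"
proof -
  obtain s where s: "\<And>F. cfun F \<Longrightarrow> B1 F G - B2 F G = F s"
    using tensor_form_slice1[OF tensor_form_diff[OF B] G] by blast
  have "s = 0"
  proof (rule nondegenerate_rmult_zero[OF nd])
    fix u and F :: "'a \<Rightarrow> complex" assume "cfun F"
    then show "F (s * u) = 0" using s[of "rtrans F u"] eq[OF _ G] by simp
  qed
  then show ?thesis using s[OF F] cfun_zero[OF F] by simp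
qed

lemma tensor_form_eq_ltrans1:
  assumes nd: "nondegenerate TYPE('a::calg)"
    and B: "tensor_form (B1 :: ('a \<Rightarrow> complex) \<Rightarrow> _)" "tensor_form B2"
    and eq: "\<And>F G u. cfun F \<Longrightarrow> cfun G \<Longrightarrow> B1 (ltrans u F) G = B2 (ltrans u F) G"
    and F: "cfun F" and G: "cfun G"
  shows "B1 F G = B2 F G"
proof -
  obtain s where s: "\<And>F. cfun F \<Longrightarrow> B1 F G - B2 F G = F s"
    using tensor_form_slice1[OF tensor_form_diff[OF B] G] by blast
  have "s = 0"
  proof (rule nondegenerate_lmult_zero[OF nd])
    fix u and F :: "'a \<Rightarrow> complex" assume "cfun F"
    then show "F (u * s) = 0" using s[of "ltrans u F"] eq[OF _ G] by simp
  qed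
  then show ?thesis using s[OF F] cfun_zero[OF F] by simp
qed

lemma tensor_form_eq_rtrans2:
  assumes nd: "nondegenerate TYPE('a::calg)"
    and B: "tensor_form (B1 :: ('a \<Rightarrow> complex) \<Rightarrow> _)" "tensor_form B2"
    and eq: "\<And>F G u. cfun F \<Longrightarrow> cfun G \<Longrightarrow> B1 F (rtrans G u) = B2 F (rtrans G u)"
    and F: "cfun F" and G: "cfun G"
  shows "B1 F G = B2 F G"
  by (rule tensor_form_eq_rtrans1[OF nd tensor_form_swap[OF B(1)] tensor_form_swap[OF B(2)] _ G F])
    (simp add: eq)

lemma tensor_form_eq_ltrans2:
  assumes nd: "nondegenerate TYPE('a::calg)"
    and B: "tensor_form (B1 :: ('a \<Rightarrow> complex) \<Rightarrow> _)" "tensor_form B2"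
    and eq: "\<And>F G u. cfun F \<Longrightarrow> cfun G \<Longrightarrow> B1 F (ltrans u G) = B2 F (ltrans u G)"
    and F: "cfun F" and G: "cfun G"
  shows "B1 F G = B2 F G"
  by (rule tensor_form_eq_ltrans1[OF nd tensor_form_swap[OF B(1)] tensor_form_swap[OF B(2)] _ G F])
    (simp add: eq)

lemma tensor_form_eq_rtrans:
  assumes nd: "nondegenerate TYPE('a::calg)"
    and B: "tensor_form (B1 :: ('a \<Rightarrow> complex) \<Rightarrow> _)" "tensor_form B2"
    and eq: "\<And>f g u v. cfun f \<Longrightarrow> cfun g \<Longrightarrow> B1 (rtrans f u) (rtrans g v) = B2 (rtrans f u) (rtrans g v)"
    and F: "cfun F" and G: "cfun G"
  shows "B1 F G = B2 F G"
proof (rule tensor_form_eq_rtrans1[OF nd B _ F G])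
  fix F G :: "'a \<Rightarrow> complex" and u assume F: "cfun F" and G: "cfun G"
  show "B1 (rtrans F u) G = B2 (rtrans F u) G"
    by (rule tensor_form_eq_rtrans2[OF nd tensor_form_rtrans1[OF B(1)] tensor_form_rtrans1[OF B(2)] _ F G])
      (rule eq)
qed

lemma tensor_form_eq_ltrans:
  assumes nd: "nondegenerate TYPE('a::calg)"
    and B: "tensor_form (B1 :: ('a \<Rightarrow> complex) \<Rightarrow> _)" "tensor_form B2"
    and eq: "\<And>f g u v. cfun f \<Longrightarrow> cfun g \<Longrightarrow> B1 (ltrans u f) (ltrans v g) = B2 (ltrans u f) (ltrans v g)"
    and F: "cfun F" and G: "cfun G"
  shows "B1 F G = B2 F G"
proof (rule tensor_form_eq_ltrans1[OF nd B _ F G])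
  fix F G :: "'a \<Rightarrow> complex" and u assume F: "cfun F" and G: "cfun G"
  show "B1 (ltrans u F) G = B2 (ltrans u F) G"
    by (rule tensor_form_eq_ltrans2[OF nd tensor_form_ltrans1[OF B(1)] tensor_form_ltrans1[OF B(2)] _ F G])
      (rule eq)
qed

section \<open>Products, multipliers and slices in the tensor square\<close>

lemma teval_mult2_tensor_sum:
  assumes Z: "Z \<in> T2" and f: "cfun f" and g: "cfun g" and I: "finite I"
  shows "teval (mult2 Z (tensor_sum I c d)) f g = (\<Sum>i\<in>I. teval Z (rtrans f (c i)) (rtrans g (d i)))"
proof -
  have "tensor_sum I c d (\<lambda>c' d'. f (a * c') * g (b * d')) = (\<Sum>i\<in>I. f (a * c i) * g (b * d i))"
    for a b using teval_tensor_sum[OF cfun_ltrans[OF f, of a] cfun_ltrans[OF g, of b], of I c d]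
    by (simp add: teval_def)
  then have "mult2 Z (tensor_sum I c d) (\<lambda>x y. f x * g y) = Z (\<lambda>a b. \<Sum>i\<in>I. f (a * c i) * g (b * d i))"
    by (simp add: mult2_def g2_def bil_product[OF f g])
  also have "\<dots> = (\<Sum>i\<in>I. Z (\<lambda>a b. f (a * c i) * g (b * d i)))"
    using T2_bil_sum[OF Z I, of "\<lambda>i a b. f (a * c i) * g (b * d i)"]
      bil_product[OF cfun_rtrans[OF f] cfun_rtrans[OF g]] by simp
  finally show ?thesis by (simp add: teval_def)
qed

lemma teval_mult2_tp:
  "Z \<in> T2 \<Longrightarrow> cfun f \<Longrightarrow> cfun g \<Longrightarrow> teval (mult2 Z (tp u v)) f g = teval Z (rtrans f u) (rtrans g v)"
  using teval_mult2_tensor_sum[of Z f g "{()}" "\<lambda>_. u" "\<lambda>_. v"] by (simp add: tp_eq_tensor_sum)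

lemma teval_tensor_sum_mult2:
  assumes Z: "Z \<in> T2" and f: "cfun f" and g: "cfun g"
  shows "teval (mult2 (tensor_sum I c d) Z) f g = (\<Sum>i\<in>I. teval Z (ltrans (c i) f) (ltrans (d i) g))"
proof -
  obtain n x y where Z: "Z = tensor_sum {..<(n::nat)} x y" using T2_tensor_sum[OF Z] by blast
  have bil_ltrans: "bil (\<lambda>u v. f (a * u) * g (b * v))" for a b
    using bil_product[OF cfun_ltrans[OF f, of a] cfun_ltrans[OF g, of b]] by simp
  have "bil (\<lambda>a b. \<Sum>j<n. rtrans f (x j) a * rtrans g (y j) b)"
    by (intro bil_sum bil_product cfun_rtrans f g) simp
  then have "bil (\<lambda>a b. Z (\<lambda>u v. f (a * u) * g (b * v)))"
    by (simp add: Z tensor_sum_def bil_ltrans)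
  then show ?thesis
    by (simp add: mult2_def g2_def teval_def tensor_sum_def bil_product[OF f g])
qed

lemma teval_tp_mult2:
  "Z \<in> T2 \<Longrightarrow> cfun f \<Longrightarrow> cfun g \<Longrightarrow> teval (mult2 (tp u v) Z) f g = teval Z (ltrans u f) (ltrans v g)"
  using teval_tensor_sum_mult2[of Z f g "{()}" "\<lambda>_. u" "\<lambda>_. v"] by (simp add: tp_eq_tensor_sum)

lemma teval_one_t: "cfun f \<Longrightarrow> cfun g \<Longrightarrow> teval (fst (one_t b) Z) f g = teval Z f (ltrans b g)"
  and teval_t_one: "cfun f \<Longrightarrow> cfun g \<Longrightarrow> teval (fst (t_one b) Z) f g = teval Z (ltrans b f) g"
  by (simp_all add: one_t_def t_one_def teval_def g2_def bil_product)

lemma one_t_tp: "fst (one_t b) (tp u v) = tp u (b * v)"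
  and t_one_tp: "fst (t_one b) (tp u v) = tp (b * u) v"
  by (simp_all add: fun_eq_iff one_t_def t_one_def tp_def g2_def bil_lmult1 bil_lmult2)

lemma teval_slice_r:
  assumes Z: "Z \<in> T2" and h: "cfun h" and g: "cfun g"
  shows "teval Z g h = g (slice_r h Z)"
proof -
  have "\<exists>x. \<forall>g. cfun g \<longrightarrow> Z (\<lambda>u v. g u * h v) = g x"
    using tensor_form_slice1[OF tensor_form_teval[OF Z] h] unfolding teval_def by metis
  then have "\<forall>g. cfun g \<longrightarrow> Z (\<lambda>u v. g u * h v) = g (slice_r h Z)"
    unfolding slice_r_def by (rule someI_ex)
  then show ?thesis using g by (simp add: teval_def)
qed

lemma teval_slice_l:
  assumes Z: "Z \<in> T2" and h: "cfun h" and g: "cfun g"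
  shows "teval Z h g = g (slice_l h Z)"
proof -
  have "\<exists>x. \<forall>g. cfun g \<longrightarrow> Z (\<lambda>u v. h u * g v) = g x"
    using tensor_form_slice2[OF tensor_form_teval[OF Z] h] unfolding teval_def by metis
  then have "\<forall>g. cfun g \<longrightarrow> Z (\<lambda>u v. h u * g v) = g (slice_l h Z)"
    unfolding slice_l_def by (rule someI_ex)
  then show ?thesis using g by (simp add: teval_def)
qed

lemma as2_T2: "in2 m \<Longrightarrow> as2 m \<in> T2"
  and mult2_as2: "in2 m \<Longrightarrow> y \<in> T2 \<Longrightarrow> mult2 (as2 m) y = fst m y"
proof -
  assume "in2 m"
  then have "\<exists>t. t \<in> T2 \<and> mult_eq T2 (emb mult2 t) m" unfolding in2_def by blast
  then have "as2 m \<in> T2 \<and> mult_eq T2 (emb mult2 (as2 m)) m"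
    unfolding as2_def by (rule someI_ex)
  then show "as2 m \<in> T2" and "y \<in> T2 \<Longrightarrow> mult2 (as2 m) y = fst m y"
    by (simp_all add: mult_eq_def emb_def)
qed

lemma flipSS_tensor_sum:
  "clin S \<Longrightarrow> flipSS S (tensor_sum I a b) = tensor_sum I (\<lambda>i. S (b i)) (\<lambda>i. S (a i))"
  by (simp add: fun_eq_iff flipSS_def tensor_sum_def g2_def bil_flip)

lemma flipSS_T2: "Z \<in> T2 \<Longrightarrow> clin S \<Longrightarrow> flipSS S Z \<in> T2"
  by (auto dest!: T2_tensor_sum simp: flipSS_tensor_sum tensor_sum_in_T2)

lemma teval_flipSS:
  "cfun f \<Longrightarrow> cfun g \<Longrightarrow> teval (flipSS S Z) f g = teval Z (\<lambda>x. g (S x)) (\<lambda>x. f (S x))"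
  by (simp add: flipSS_def teval_def g2_def bil_product mult.commute)

lemma flipSS_addt: "flipSS S (addt Z Z') = addt (flipSS S Z) (flipSS S Z')"
  and flipSS_scalet: "flipSS S (scalet c Z) = scalet c (flipSS S Z)"
  and flipSS_zero: "flipSS S (\<lambda>\<beta>. 0) = (\<lambda>\<beta>. 0)"
  by (simp_all add: fun_eq_iff flipSS_def addt_def scalet_def g2_def)

lemma tp3_in_T3: "tp3 u v w \<in> T3"
  unfolding T3_def
  by (intro CollectI exI[of _ "1::nat"] exI[of _ "\<lambda>_. u"] exI[of _ "\<lambda>_. v"] exI[of _ "\<lambda>_. w"]) simp

lemma one_one_t_tp3: "fst (one_one_t c) (tp3 u v w) = tp3 u v (c * w)"
  by (simp add: fun_eq_iff one_one_t_def tp3_def g3_def tril_lmult3)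

locale quantum_hypergroup =
  fixes \<Delta> :: "'a::calg \<Rightarrow> 'a m2" and \<epsilon> :: "'a \<Rightarrow> complex" and S :: "'a \<Rightarrow> 'a"
    and \<phi> :: "'a \<Rightarrow> complex"
  assumes nondeg: "nondegenerate TYPE('a)" and regular: "regular_comult \<Delta>"
    and counit_eps: "counit \<Delta> \<epsilon>" and left_integral_phi: "left_integral \<Delta> \<phi>"
    and faithful_phi: "faithful \<phi>" and antipode_S: "antipode \<Delta> \<phi> S"
begin

lemma Delta_mult_T2: "y \<in> T2 \<Longrightarrow> fst (\<Delta> a) y \<in> T2"
  and mult_Delta_T2: "y \<in> T2 \<Longrightarrow> snd (\<Delta> a) y \<in> T2"
  and mult2_Delta_assoc: "x \<in> T2 \<Longrightarrow> y \<in> T2 \<Longrightarrow> mult2 x (fst (\<Delta> a) y) = mult2 (snd (\<Delta> a) x) y"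
  using regular by (simp_all add: regular_comult_def is_mult_def)

lemma Delta_add:
    "y \<in> T2 \<Longrightarrow> fst (\<Delta> (a + a')) y = addt (fst (\<Delta> a) y) (fst (\<Delta> a') y)"
    "y \<in> T2 \<Longrightarrow> snd (\<Delta> (a + a')) y = addt (snd (\<Delta> a) y) (snd (\<Delta> a') y)"
  and Delta_scale:
    "y \<in> T2 \<Longrightarrow> fst (\<Delta> (cscale c a)) y = scalet c (fst (\<Delta> a) y)"
    "y \<in> T2 \<Longrightarrow> snd (\<Delta> (cscale c a)) y = scalet c (snd (\<Delta> a) y)"
  using regular by (simp_all add: regular_comult_def)

lemma Delta_in2: "in2 (mmul (\<Delta> a) (one_t b))" "in2 (mmul (t_one a) (\<Delta> b))"
  "in2 (mmul (\<Delta> a) (t_one b))" "in2 (mmul (one_t a) (\<Delta> b))"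
  using regular by (simp_all add: regular_comult_def)

definition Delta_tp :: "'a \<Rightarrow> 'a \<Rightarrow> 'a \<Rightarrow> ('a \<Rightarrow> complex) \<Rightarrow> ('a \<Rightarrow> complex) \<Rightarrow> complex" where
  "Delta_tp a u v = teval (fst (\<Delta> a) (tp u v))"

definition tp_Delta :: "'a \<Rightarrow> 'a \<Rightarrow> 'a \<Rightarrow> ('a \<Rightarrow> complex) \<Rightarrow> ('a \<Rightarrow> complex) \<Rightarrow> complex" where
  "tp_Delta a x y = teval (snd (\<Delta> a) (tp x y))"

lemma tensor_form_Delta_tp: "tensor_form (Delta_tp a u v)"
  and tensor_form_tp_Delta: "tensor_form (tp_Delta a u v)"
  by (simp_all add: Delta_tp_def tp_Delta_def tensor_form_teval Delta_mult_T2 mult_Delta_T2)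

text \<open>Both sides are the value of (x \<otimes> y) \<Delta>(a) (u \<otimes> v) on f \<otimes> g.\<close>

lemma Delta_tp_ltrans:
  "cfun f \<Longrightarrow> cfun g \<Longrightarrow> Delta_tp a u v (ltrans x f) (ltrans y g) = tp_Delta a x y (rtrans f u) (rtrans g v)"
  unfolding Delta_tp_def tp_Delta_def
  by (simp add: teval_tp_mult2[symmetric] teval_mult2_tp[symmetric] Delta_mult_T2 mult_Delta_T2 mult2_Delta_assoc)

lemma cfun_Delta_tp_a: "cfun (\<lambda>a. Delta_tp a u v f g)"
  and cfun_tp_Delta_a: "cfun (\<lambda>a. tp_Delta a u v f g)"
  by (simp_all add: cfun_def Delta_tp_def tp_Delta_def Delta_add Delta_scale teval_addt teval_scalet)

lemma cfun_Delta_tp_u: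
  assumes f: "cfun f" and g: "cfun g" shows "cfun (\<lambda>u. Delta_tp a u v f g)"
  unfolding cfun_def
proof (intro conjI allI)
  fix u1 u2
  show "Delta_tp a (u1 + u2) v f g = Delta_tp a u1 v f g + Delta_tp a u2 v f g"
  proof (rule tensor_form_eq_ltrans[OF nondeg tensor_form_Delta_tp
        tensor_form_add[OF tensor_form_Delta_tp tensor_form_Delta_tp] _ f g])
    fix f g :: "'a \<Rightarrow> complex" and x y assume f: "cfun f" and g: "cfun g"
    show "Delta_tp a (u1 + u2) v (ltrans x f) (ltrans y g)
      = Delta_tp a u1 v (ltrans x f) (ltrans y g) + Delta_tp a u2 v (ltrans x f) (ltrans y g)"
      using tensor_form_add1[OF tensor_form_tp_Delta cfun_rtrans[OF f] cfun_rtrans[OF f] cfun_rtrans[OF g]]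
      by (simp add: Delta_tp_ltrans f g rtrans_add)
  qed
next
  fix c u
  show "Delta_tp a (cscale c u) v f g = c * Delta_tp a u v f g"
  proof (rule tensor_form_eq_ltrans[OF nondeg tensor_form_Delta_tp tensor_form_cmult[OF tensor_form_Delta_tp] _ f g])
    fix f g :: "'a \<Rightarrow> complex" and x y assume f: "cfun f" and g: "cfun g"
    show "Delta_tp a (cscale c u) v (ltrans x f) (ltrans y g) = c * Delta_tp a u v (ltrans x f) (ltrans y g)"
      using tensor_form_cmult1[OF tensor_form_tp_Delta cfun_rtrans[OF f] cfun_rtrans[OF g]]
      by (simp add: Delta_tp_ltrans f g rtrans_scale)
  qed
qed

lemma cfun_Delta_tp_v:
  assumes f: "cfun f" and g: "cfun g" shows "cfun (\<lambda>v. Delta_tp a u v f g)"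
  unfolding cfun_def
proof (intro conjI allI)
  fix v1 v2
  show "Delta_tp a u (v1 + v2) f g = Delta_tp a u v1 f g + Delta_tp a u v2 f g"
  proof (rule tensor_form_eq_ltrans[OF nondeg tensor_form_Delta_tp
        tensor_form_add[OF tensor_form_Delta_tp tensor_form_Delta_tp] _ f g])
    fix f g :: "'a \<Rightarrow> complex" and x y assume f: "cfun f" and g: "cfun g"
    show "Delta_tp a u (v1 + v2) (ltrans x f) (ltrans y g)
      = Delta_tp a u v1 (ltrans x f) (ltrans y g) + Delta_tp a u v2 (ltrans x f) (ltrans y g)"
      using tensor_form_add2[OF tensor_form_tp_Delta cfun_rtrans[OF f] cfun_rtrans[OF g] cfun_rtrans[OF g]]
      by (simp add: Delta_tp_ltrans f g rtrans_add)
  qed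
next
  fix c v
  show "Delta_tp a u (cscale c v) f g = c * Delta_tp a u v f g"
  proof (rule tensor_form_eq_ltrans[OF nondeg tensor_form_Delta_tp tensor_form_cmult[OF tensor_form_Delta_tp] _ f g])
    fix f g :: "'a \<Rightarrow> complex" and x y assume f: "cfun f" and g: "cfun g"
    show "Delta_tp a u (cscale c v) (ltrans x f) (ltrans y g) = c * Delta_tp a u v (ltrans x f) (ltrans y g)"
      using tensor_form_cmult2[OF tensor_form_tp_Delta cfun_rtrans[OF f] cfun_rtrans[OF g]]
      by (simp add: Delta_tp_ltrans f g rtrans_scale)
  qed
qed

lemma Delta_tp_mult_u:
  assumes f: "cfun f" and g: "cfun g"
  shows "Delta_tp a (u * w) v f g = Delta_tp a u v (rtrans f w) g"
proof (rule tensor_form_eq_ltrans[OF nondeg tensor_form_Delta_tp tensor_form_rtrans1[OF tensor_form_Delta_tp] _ f g])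
  fix f g :: "'a \<Rightarrow> complex" and x y assume f: "cfun f" and g: "cfun g"
  show "Delta_tp a (u * w) v (ltrans x f) (ltrans y g) = Delta_tp a u v (rtrans (ltrans x f) w) (ltrans y g)"
    by (simp add: Delta_tp_ltrans f g ltrans_rtrans[symmetric] rtrans_rtrans)
qed

lemma Delta_tp_mult_v:
  assumes f: "cfun f" and g: "cfun g"
  shows "Delta_tp a u (v * w) f g = Delta_tp a u v f (rtrans g w)"
proof (rule tensor_form_eq_ltrans[OF nondeg tensor_form_Delta_tp tensor_form_rtrans2[OF tensor_form_Delta_tp] _ f g])
  fix f g :: "'a \<Rightarrow> complex" and x y assume f: "cfun f" and g: "cfun g"
  show "Delta_tp a u (v * w) (ltrans x f) (ltrans y g) = Delta_tp a u v (ltrans x f) (rtrans (ltrans y g) w)"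
    by (simp add: Delta_tp_ltrans f g ltrans_rtrans[symmetric] rtrans_rtrans)
qed

lemma teval_Delta_tensor_sum:
  assumes I: "finite I" and F: "cfun F" and G: "cfun G"
  shows "teval (fst (\<Delta> a) (tensor_sum I c d)) F G = (\<Sum>i\<in>I. Delta_tp a (c i) (d i) F G)"
proof (rule tensor_form_eq_ltrans[OF nondeg tensor_form_teval[OF Delta_mult_T2[OF tensor_sum_in_T2[OF I]]]
      tensor_form_sum[OF I tensor_form_Delta_tp] _ F G])
  fix f g :: "'a \<Rightarrow> complex" and x y assume f: "cfun f" and g: "cfun g"
  have "teval (fst (\<Delta> a) (tensor_sum I c d)) (ltrans x f) (ltrans y g)
      = teval (mult2 (snd (\<Delta> a) (tp x y)) (tensor_sum I c d)) f g"
    by (simp add: teval_tp_mult2[symmetric] f g Delta_mult_T2 tensor_sum_in_T2[OF I] mult2_Delta_assoc)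
  also have "\<dots> = (\<Sum>i\<in>I. tp_Delta a x y (rtrans f (c i)) (rtrans g (d i)))"
    unfolding tp_Delta_def by (rule teval_mult2_tensor_sum[OF mult_Delta_T2[OF tp_in_T2] f g I])
  finally show "teval (fst (\<Delta> a) (tensor_sum I c d)) (ltrans x f) (ltrans y g)
      = (\<Sum>i\<in>I. Delta_tp a (c i) (d i) (ltrans x f) (ltrans y g))"
    by (simp add: Delta_tp_ltrans f g)
qed

lemma teval_tensor_sum_Delta:
  assumes I: "finite I" and F: "cfun F" and G: "cfun G"
  shows "teval (snd (\<Delta> a) (tensor_sum I c d)) F G = (\<Sum>i\<in>I. tp_Delta a (c i) (d i) F G)"
proof (rule tensor_form_eq_rtrans[OF nondeg tensor_form_teval[OF mult_Delta_T2[OF tensor_sum_in_T2[OF I]]]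
      tensor_form_sum[OF I tensor_form_tp_Delta] _ F G])
  fix f g :: "'a \<Rightarrow> complex" and u v assume f: "cfun f" and g: "cfun g"
  have "teval (snd (\<Delta> a) (tensor_sum I c d)) (rtrans f u) (rtrans g v)
      = teval (mult2 (tensor_sum I c d) (fst (\<Delta> a) (tp u v))) f g"
    by (simp add: teval_mult2_tp[symmetric] f g mult_Delta_T2 tensor_sum_in_T2[OF I] mult2_Delta_assoc)
  also have "\<dots> = (\<Sum>i\<in>I. Delta_tp a u v (ltrans (c i) f) (ltrans (d i) g))"
    unfolding Delta_tp_def by (rule teval_tensor_sum_mult2[OF Delta_mult_T2[OF tp_in_T2] f g])
  finally show "teval (snd (\<Delta> a) (tensor_sum I c d)) (rtrans f u) (rtrans g v)
      = (\<Sum>i\<in>I. tp_Delta a (c i) (d i) (rtrans f u) (rtrans g v))"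
    by (simp add: Delta_tp_ltrans f g)
qed

definition Delta_one_t :: "'a \<Rightarrow> 'a \<Rightarrow> 'a t2" where
  "Delta_one_t a b = as2 (mmul (\<Delta> a) (one_t b))"

definition one_t_Delta :: "'a \<Rightarrow> 'a \<Rightarrow> 'a t2" where
  "one_t_Delta a b = as2 (mmul (one_t a) (\<Delta> b))"

definition Delta_t_one :: "'a \<Rightarrow> 'a \<Rightarrow> 'a t2" where
  "Delta_t_one a b = as2 (mmul (\<Delta> a) (t_one b))"

definition t_one_Delta :: "'a \<Rightarrow> 'a \<Rightarrow> 'a t2" where
  "t_one_Delta a b = as2 (mmul (t_one a) (\<Delta> b))"

lemma Delta_one_t_T2: "Delta_one_t a b \<in> T2"
  and one_t_Delta_T2: "one_t_Delta a b \<in> T2"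
  and Delta_t_one_T2: "Delta_t_one a b \<in> T2"
  and t_one_Delta_T2: "t_one_Delta a b \<in> T2"
  by (simp_all add: Delta_one_t_def one_t_Delta_def Delta_t_one_def t_one_Delta_def as2_T2 Delta_in2)

lemmas tensor_form_Delta_one_t = tensor_form_teval[OF Delta_one_t_T2]
  and tensor_form_one_t_Delta = tensor_form_teval[OF one_t_Delta_T2]
  and tensor_form_Delta_t_one = tensor_form_teval[OF Delta_t_one_T2]
  and tensor_form_t_one_Delta = tensor_form_teval[OF t_one_Delta_T2]

lemma teval_Delta_one_t_rtrans:
  assumes "cfun f" "cfun g"
  shows "teval (Delta_one_t a b) (rtrans f u) (rtrans g v) = Delta_tp a u (b * v) f g"
proof -
  have "mult2 (Delta_one_t a b) (tp u v) = fst (\<Delta> a) (tp u (b * v))"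
    by (simp add: Delta_one_t_def mult2_as2[OF Delta_in2(1)]) (simp add: mmul_def one_t_tp)
  then show ?thesis using assms by (simp add: teval_mult2_tp[symmetric] Delta_one_t_T2 Delta_tp_def)
qed

lemma teval_Delta_t_one_rtrans:
  assumes "cfun f" "cfun g"
  shows "teval (Delta_t_one a b) (rtrans f u) (rtrans g v) = Delta_tp a (b * u) v f g"
proof -
  have "mult2 (Delta_t_one a b) (tp u v) = fst (\<Delta> a) (tp (b * u) v)"
    by (simp add: Delta_t_one_def mult2_as2[OF Delta_in2(3)]) (simp add: mmul_def t_one_tp)
  then show ?thesis using assms by (simp add: teval_mult2_tp[symmetric] Delta_t_one_T2 Delta_tp_def)
qed

lemma teval_one_t_Delta_rtrans:
  assumes "cfun f" "cfun g"
  shows "teval (one_t_Delta a b) (rtrans f u) (rtrans g v) = Delta_tp b u v f (ltrans a g)"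
proof -
  have "mult2 (one_t_Delta a b) (tp u v) = fst (one_t a) (fst (\<Delta> b) (tp u v))"
    by (simp add: one_t_Delta_def mult2_as2[OF Delta_in2(4)]) (simp add: mmul_def)
  then show ?thesis using assms by (simp add: teval_mult2_tp[symmetric] one_t_Delta_T2 Delta_tp_def teval_one_t)
qed

lemma teval_t_one_Delta_rtrans:
  assumes "cfun f" "cfun g"
  shows "teval (t_one_Delta a b) (rtrans f u) (rtrans g v) = Delta_tp b u v (ltrans a f) g"
proof -
  have "mult2 (t_one_Delta a b) (tp u v) = fst (t_one a) (fst (\<Delta> b) (tp u v))"
    by (simp add: t_one_Delta_def mult2_as2[OF Delta_in2(2)]) (simp add: mmul_def)
  then show ?thesis using assms by (simp add: teval_mult2_tp[symmetric] t_one_Delta_T2 Delta_tp_def teval_t_one)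
qed

lemma cfun_counit: "cfun \<epsilon>" and counit_mult: "\<epsilon> (a * b) = \<epsilon> a * \<epsilon> b"
  using counit_eps by (simp_all add: counit_def)

lemma teval_Delta_one_t_counit: "cfun g \<Longrightarrow> teval (Delta_one_t a b) \<epsilon> g = g (a * b)"
  and teval_one_t_Delta_counit: "cfun g \<Longrightarrow> teval (one_t_Delta a b) \<epsilon> g = g (a * b)"
  and teval_Delta_t_one_counit: "cfun g \<Longrightarrow> teval (Delta_t_one a b) g \<epsilon> = g (a * b)"
  using teval_slice_l[OF Delta_one_t_T2 cfun_counit] teval_slice_l[OF one_t_Delta_T2 cfun_counit]
    teval_slice_r[OF Delta_t_one_T2 cfun_counit] counit_eps
  by (simp_all add: counit_def Delta_one_t_def one_t_Delta_def Delta_t_one_def)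

lemma cfun_phi: "cfun \<phi>" and phi_nonzero: "\<exists>a. \<phi> a \<noteq> 0"
  using left_integral_phi by (simp_all add: left_integral_def)

lemma faithful_phi_eq_0: "(\<And>b. \<phi> (a * b) = 0) \<Longrightarrow> a = 0"
  using faithful_phi unfolding faithful_def by blast

lemma S_bij: "bij S" and S_clin: "clin S" and S_anti_mult: "S (a * b) = S b * S a"
  using antipode_S by (simp_all add: antipode_def)

subsection \<open>Coassociativity on functionals\<close>

lemma t_one_one_mmul: "tril \<gamma> \<Longrightarrow> fst (mmul (t_one_one a) m) W \<gamma> = fst m W (\<lambda>x y z. \<gamma> (a * x) y z)"
  by (simp add: mmul_def t_one_one_def g3_def)

lemma DeltaI_tp3:
  assumes f: "cfun f" and g: "cfun g" and h: "cfun h"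
  shows "fst (DeltaI \<Delta> Z) (tp3 u v w) (\<lambda>x y z. f x * g y * h z)
    = teval Z (\<lambda>a. Delta_tp a u v f g) (rtrans h w)"
proof -
  have inner: "fst (\<Delta> a) (tp x y) (\<lambda>x' y'. f x' * g y' * h (b * z)) = Delta_tp a x y f g * h (b * z)"
    for a b x y z
    using T2_bil_multc[OF Delta_mult_T2[OF tp_in_T2] bil_product[OF f g]] by (simp add: Delta_tp_def teval_def)
  have "tril (\<lambda>x y z. Delta_tp a x y f g * h (b * z))" for a b
    by (simp add: tril_def cfun_multc cfun_cmult cfun_Delta_tp_u cfun_Delta_tp_v f g h)
  then show ?thesis
    by (simp add: DeltaI_def g3_def tril_product[OF f g h] inner tp3_def teval_def)
qed

lemma IDelta_tp3:
  assumes f: "cfun f" and g: "cfun g" and h: "cfun h"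
  shows "fst (IDelta \<Delta> Z) (tp3 u v w) (\<lambda>x y z. f x * g y * h z)
    = teval Z (rtrans f u) (\<lambda>b. Delta_tp b v w g h)"
proof -
  have inner: "fst (\<Delta> b) (tp y z) (\<lambda>y' z'. f (a * x) * g y' * h z') = f (a * x) * Delta_tp b y z g h"
    for a b x y z
    unfolding Delta_tp_def teval_def mult.assoc
    by (rule T2_bil_cmult[OF Delta_mult_T2[OF tp_in_T2] bil_product[OF g h]])
  have "tril (\<lambda>x y z. f (a * x) * Delta_tp b y z g h)" for a b
    by (simp add: tril_def cfun_multc cfun_cmult cfun_Delta_tp_u cfun_Delta_tp_v f g h)
  then show ?thesis
    by (simp add: IDelta_def g3_def tril_product[OF f g h] inner tp3_def teval_def)
qed

text \<open>The coassociativity axiom, evaluated at u \<otimes> v \<otimes> w against f \<otimes> g \<otimes> h.\<close>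

lemma coassoc_tp3:
  assumes f: "cfun f" and g: "cfun g" and h: "cfun h"
  shows "teval (Delta_one_t b c) (\<lambda>a'. Delta_tp a' u v (ltrans a f) g) (rtrans h w)
    = teval (t_one_Delta a b) (rtrans f u) (\<lambda>b'. Delta_tp b' v (c * w) g h)"
proof -
  let ?\<gamma> = "\<lambda>x y z. f x * g y * h z"
  have "mult_eq T3 (mmul (t_one_one a) (DeltaI \<Delta> (Delta_one_t b c)))
      (mmul (IDelta \<Delta> (t_one_Delta a b)) (one_one_t c))"
    using regular unfolding regular_comult_def Delta_one_t_def t_one_Delta_def by blast
  then have "fst (mmul (t_one_one a) (DeltaI \<Delta> (Delta_one_t b c))) (tp3 u v w)
      = fst (mmul (IDelta \<Delta> (t_one_Delta a b)) (one_one_t c)) (tp3 u v w)"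
    unfolding mult_eq_def using tp3_in_T3 by blast
  then have "fst (mmul (t_one_one a) (DeltaI \<Delta> (Delta_one_t b c))) (tp3 u v w) ?\<gamma>
      = fst (mmul (IDelta \<Delta> (t_one_Delta a b)) (one_one_t c)) (tp3 u v w) ?\<gamma>"
    by (rule fun_cong)
  moreover have "fst (mmul (t_one_one a) (DeltaI \<Delta> (Delta_one_t b c))) (tp3 u v w) ?\<gamma>
      = teval (Delta_one_t b c) (\<lambda>a'. Delta_tp a' u v (ltrans a f) g) (rtrans h w)"
    using DeltaI_tp3[OF cfun_ltrans[OF f] g h, of "Delta_one_t b c" u v w]
    by (simp add: t_one_one_mmul tril_product f g h)
  moreover have "fst (mmul (IDelta \<Delta> (t_one_Delta a b)) (one_one_t c)) (tp3 u v w) ?\<gamma>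
      = teval (t_one_Delta a b) (rtrans f u) (\<lambda>b'. Delta_tp b' v (c * w) g h)"
    by (simp add: mmul_def one_one_t_tp3 IDelta_tp3 f g h)
  ultimately show ?thesis by simp
qed

lemma teval_Delta_one_t_mult:
  assumes F: "cfun F" and G: "cfun G"
  shows "teval (Delta_one_t a b) F (rtrans G c) = teval (Delta_one_t a (b * c)) F G"
proof (rule tensor_form_eq_rtrans[OF nondeg tensor_form_rtrans2[OF tensor_form_Delta_one_t]
      tensor_form_Delta_one_t _ F G])
  fix f g :: "'a \<Rightarrow> complex" and u v assume f: "cfun f" and g: "cfun g"
  show "teval (Delta_one_t a b) (rtrans f u) (rtrans (rtrans g v) c)
    = teval (Delta_one_t a (b * c)) (rtrans f u) (rtrans g v)"
    by (simp only: rtrans_rtrans teval_Delta_one_t_rtrans[OF f g] mult.assoc)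
qed

lemma teval_Delta_one_t_Delta_t_one:
  assumes F: "cfun F" and G: "cfun G"
  shows "teval (Delta_one_t a b) (rtrans F d) G = teval (Delta_t_one a d) F (rtrans G b)"
proof (rule tensor_form_eq_rtrans[OF nondeg tensor_form_rtrans1[OF tensor_form_Delta_one_t]
      tensor_form_rtrans2[OF tensor_form_Delta_t_one] _ F G])
  fix f g :: "'a \<Rightarrow> complex" and u v assume f: "cfun f" and g: "cfun g"
  show "teval (Delta_one_t a b) (rtrans (rtrans f u) d) (rtrans g v)
    = teval (Delta_t_one a d) (rtrans f u) (rtrans (rtrans g v) b)"
    by (simp only: rtrans_rtrans teval_Delta_one_t_rtrans[OF f g] teval_Delta_t_one_rtrans[OF f g])
qed

lemma teval_Delta_one_t_Delta_tp:
  assumes F: "cfun F" and G: "cfun G"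
  shows "teval (Delta_one_t a b) (rtrans F u) G = Delta_tp a u b F G"
proof (rule tensor_form_eq_rtrans2[OF nondeg tensor_form_rtrans1[OF tensor_form_Delta_one_t]
      tensor_form_Delta_tp _ F G])
  fix F G :: "'a \<Rightarrow> complex" and v assume F: "cfun F" and G: "cfun G"
  show "teval (Delta_one_t a b) (rtrans F u) (rtrans G v) = Delta_tp a u b F (rtrans G v)"
    by (simp only: teval_Delta_one_t_rtrans[OF F G] Delta_tp_mult_v[OF F G])
qed

lemma teval_Delta_t_one_Delta_tp:
  assumes F: "cfun F" and G: "cfun G"
  shows "teval (Delta_t_one a u) F (rtrans G b) = Delta_tp a u b F G"
proof (rule tensor_form_eq_rtrans1[OF nondeg tensor_form_rtrans2[OF tensor_form_Delta_t_one]
      tensor_form_Delta_tp _ F G])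
  fix F G :: "'a \<Rightarrow> complex" and v assume F: "cfun F" and G: "cfun G"
  show "teval (Delta_t_one a u) (rtrans F v) (rtrans G b) = Delta_tp a u b (rtrans F v) G"
    by (simp only: teval_Delta_t_one_rtrans[OF F G] Delta_tp_mult_u[OF F G])
qed

lemma teval_one_t_Delta_t_one_Delta:
  assumes F: "cfun F" and G: "cfun G"
  shows "teval (one_t_Delta c b) (ltrans x F) G = teval (t_one_Delta x b) F (ltrans c G)"
proof (rule tensor_form_eq_rtrans[OF nondeg tensor_form_ltrans1[OF tensor_form_one_t_Delta]
      tensor_form_ltrans2[OF tensor_form_t_one_Delta] _ F G])
  fix f g :: "'a \<Rightarrow> complex" and u v assume f: "cfun f" and g: "cfun g"
  show "teval (one_t_Delta c b) (ltrans x (rtrans f u)) (rtrans g v)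
    = teval (t_one_Delta x b) (rtrans f u) (ltrans c (rtrans g v))"
    by (simp only: ltrans_rtrans teval_one_t_Delta_rtrans[OF cfun_ltrans[OF f] g]
        teval_t_one_Delta_rtrans[OF f cfun_ltrans[OF g]])
qed

lemma teval_t_one_Delta_Delta_t_one:
  assumes F: "cfun F" and G: "cfun G"
  shows "teval (t_one_Delta x a) (rtrans F u) G = teval (Delta_t_one a u) (ltrans x F) G"
proof (rule tensor_form_eq_rtrans2[OF nondeg tensor_form_rtrans1[OF tensor_form_t_one_Delta]
      tensor_form_ltrans1[OF tensor_form_Delta_t_one] _ F G])
  fix F G :: "'a \<Rightarrow> complex" and v assume F: "cfun F" and G: "cfun G"
  show "teval (t_one_Delta x a) (rtrans F u) (rtrans G v) = teval (Delta_t_one a u) (ltrans x F) (rtrans G v)"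
    by (simp only: teval_t_one_Delta_rtrans[OF F G] teval_Delta_t_one_Delta_tp[OF cfun_ltrans[OF F] G])
qed

lemma teval_one_t_Delta_Delta_one_t:
  assumes F: "cfun F" and G: "cfun G"
  shows "teval (one_t_Delta a b) F (rtrans G c) = teval (Delta_one_t b c) F (ltrans a G)"
proof (rule tensor_form_eq_rtrans[OF nondeg tensor_form_rtrans2[OF tensor_form_one_t_Delta]
      tensor_form_ltrans2[OF tensor_form_Delta_one_t] _ F G])
  fix f g :: "'a \<Rightarrow> complex" and u v assume f: "cfun f" and g: "cfun g"
  show "teval (one_t_Delta a b) (rtrans f u) (rtrans (rtrans g v) c)
    = teval (Delta_one_t b c) (rtrans f u) (ltrans a (rtrans g v))"
    by (simp only: rtrans_rtrans ltrans_rtrans teval_one_t_Delta_rtrans[OF f g]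
        teval_Delta_one_t_rtrans[OF f cfun_ltrans[OF g]])
qed

lemma cfun_one_t_Delta:
  assumes F: "cfun F" and G: "cfun G" shows "cfun (\<lambda>b. teval (one_t_Delta a b) F G)"
  unfolding cfun_def
proof (intro conjI allI)
  fix b1 b2
  show "teval (one_t_Delta a (b1 + b2)) F G = teval (one_t_Delta a b1) F G + teval (one_t_Delta a b2) F G"
  proof (rule tensor_form_eq_rtrans[OF nondeg tensor_form_one_t_Delta
        tensor_form_add[OF tensor_form_one_t_Delta tensor_form_one_t_Delta] _ F G])
    fix f g :: "'a \<Rightarrow> complex" and u v assume f: "cfun f" and g: "cfun g"
    show "teval (one_t_Delta a (b1 + b2)) (rtrans f u) (rtrans g v)
      = teval (one_t_Delta a b1) (rtrans f u) (rtrans g v) + teval (one_t_Delta a b2) (rtrans f u) (rtrans g v)"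
      using cfun_add[OF cfun_Delta_tp_a[of u v f "ltrans a g"]] by (simp add: teval_one_t_Delta_rtrans f g)
  qed
next
  fix c b
  show "teval (one_t_Delta a (cscale c b)) F G = c * teval (one_t_Delta a b) F G"
  proof (rule tensor_form_eq_rtrans[OF nondeg tensor_form_one_t_Delta
        tensor_form_cmult[OF tensor_form_one_t_Delta] _ F G])
    fix f g :: "'a \<Rightarrow> complex" and u v assume f: "cfun f" and g: "cfun g"
    show "teval (one_t_Delta a (cscale c b)) (rtrans f u) (rtrans g v) = c * teval (one_t_Delta a b) (rtrans f u) (rtrans g v)"
      using cfun_scale[OF cfun_Delta_tp_a[of u v f "ltrans a g"]] by (simp add: teval_one_t_Delta_rtrans f g)
  qed
qed

lemma coassoc_t_one_Delta:
  assumes f: "cfun f" and G: "cfun G" and H: "cfun H"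
  shows "teval (Delta_one_t b c) (\<lambda>m. Delta_tp m u v (ltrans x f) G) H
    = teval (t_one_Delta x b) (rtrans f u) (\<lambda>b'. Delta_tp b' v c G H)"
proof (rule tensor_form_eq_rtrans2[OF nondeg _ _ _ G H])
  show "tensor_form (\<lambda>G H. teval (Delta_one_t b c) (\<lambda>m. Delta_tp m u v (ltrans x f) G) H)"
    by (rule tensor_form_compose1[OF tensor_form_Delta_one_t])
      (simp_all add: cfun_Delta_tp_a tensor_form_slice2[OF tensor_form_Delta_tp] f)
  show "tensor_form (\<lambda>G H. teval (t_one_Delta x b) (rtrans f u) (\<lambda>b'. Delta_tp b' v c G H))"
    by (rule tensor_form_compose_inner2[OF tensor_form_t_one_Delta])
      (simp_all add: tensor_form_Delta_tp cfun_Delta_tp_a f)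
  fix G h :: "'a \<Rightarrow> complex" and w assume G: "cfun G" and h: "cfun h"
  show "teval (Delta_one_t b c) (\<lambda>m. Delta_tp m u v (ltrans x f) G) (rtrans h w)
    = teval (t_one_Delta x b) (rtrans f u) (\<lambda>b'. Delta_tp b' v c G (rtrans h w))"
    by (simp only: coassoc_tp3[OF f G h] Delta_tp_mult_v[OF G h])
qed

lemma coassoc_Delta_one_t:
  assumes F: "cfun F" and G: "cfun G" and h: "cfun h"
  shows "teval (Delta_one_t a c) (\<lambda>m. Delta_tp m u v F G) h
    = teval (Delta_t_one a u) F (\<lambda>q. Delta_tp q v c G h)"
proof (rule tensor_form_eq_ltrans1[OF nondeg _ _ _ F h])
  show "tensor_form (\<lambda>F H. teval (Delta_one_t a c) (\<lambda>m. Delta_tp m u v F G) H)"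
    by (rule tensor_form_compose1[OF tensor_form_Delta_one_t])
      (simp_all add: cfun_Delta_tp_a tensor_form_slice1[OF tensor_form_Delta_tp] G)
  show "tensor_form (\<lambda>F H. teval (Delta_t_one a u) F (\<lambda>q. Delta_tp q v c G H))"
    by (rule tensor_form_compose2[OF tensor_form_Delta_t_one])
      (simp_all add: cfun_Delta_tp_a tensor_form_slice2[OF tensor_form_Delta_tp] G)
  fix f H :: "'a \<Rightarrow> complex" and x assume f: "cfun f" and H: "cfun H"
  show "teval (Delta_one_t a c) (\<lambda>m. Delta_tp m u v (ltrans x f) G) H
    = teval (Delta_t_one a u) (ltrans x f) (\<lambda>q. Delta_tp q v c G H)"
    by (simp only: coassoc_t_one_Delta[OF f G H] teval_t_one_Delta_Delta_t_one[OF f cfun_Delta_tp_a])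
qed

lemma coassoc_one_t_Delta_rtrans:
  assumes f: "cfun f" and X: "cfun X" and h: "cfun h"
  shows "teval (one_t_Delta a b) (\<lambda>m. Delta_tp m u v (ltrans x f) X) h
    = teval (t_one_Delta x b) (rtrans f u) (\<lambda>q. teval (one_t_Delta a q) (rtrans X v) h)"
proof (rule tensor_form_eq_rtrans2[OF nondeg _ _ _ X h])
  show "tensor_form (\<lambda>X H. teval (one_t_Delta a b) (\<lambda>m. Delta_tp m u v (ltrans x f) X) H)"
    by (rule tensor_form_compose1[OF tensor_form_one_t_Delta])
      (simp_all add: cfun_Delta_tp_a tensor_form_slice2[OF tensor_form_Delta_tp] f)
  show "tensor_form (\<lambda>X H. teval (t_one_Delta x b) (rtrans f u) (\<lambda>q. teval (one_t_Delta a q) (rtrans X v) H))"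
    by (rule tensor_form_compose_inner2[OF tensor_form_t_one_Delta])
      (simp_all add: tensor_form_rtrans1[OF tensor_form_one_t_Delta] cfun_one_t_Delta f)
  fix X k :: "'a \<Rightarrow> complex" and c assume X: "cfun X" and k: "cfun k"
  show "teval (one_t_Delta a b) (\<lambda>m. Delta_tp m u v (ltrans x f) X) (rtrans k c)
    = teval (t_one_Delta x b) (rtrans f u) (\<lambda>q. teval (one_t_Delta a q) (rtrans X v) (rtrans k c))"
    by (simp only: teval_one_t_Delta_Delta_one_t[OF cfun_Delta_tp_a k] coassoc_t_one_Delta[OF f X cfun_ltrans[OF k]]
        teval_one_t_Delta_Delta_one_t[OF cfun_rtrans[OF X] k] teval_Delta_one_t_Delta_tp[OF X cfun_ltrans[OF k]])
qed

lemma coassoc_one_t_Delta: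
  assumes f: "cfun f" and g: "cfun g" and h: "cfun h"
  shows "teval (one_t_Delta a b) (\<lambda>m. tp_Delta m x y f g) h
    = teval (t_one_Delta x b) f (\<lambda>q. teval (one_t_Delta a q) (ltrans y g) h)"
proof (rule tensor_form_eq_rtrans[OF nondeg _ _ _ f g])
  show "tensor_form (\<lambda>f g. teval (one_t_Delta a b) (\<lambda>m. tp_Delta m x y f g) h)"
    by (rule tensor_form_compose_inner1[OF tensor_form_one_t_Delta h])
      (simp_all add: tensor_form_tp_Delta cfun_tp_Delta_a)
  have "\<exists>s. \<forall>g. cfun g \<longrightarrow> teval (one_t_Delta a q) (ltrans y g) h = g s" for q
    using teval_slice_r[OF one_t_Delta_T2 h cfun_ltrans] by auto
  then show "tensor_form (\<lambda>f g. teval (t_one_Delta x b) f (\<lambda>q. teval (one_t_Delta a q) (ltrans y g) h))"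
    by (intro tensor_form_compose2[OF tensor_form_t_one_Delta]) (simp_all add: cfun_one_t_Delta h)
  fix f g :: "'a \<Rightarrow> complex" and u v assume f: "cfun f" and g: "cfun g"
  show "teval (one_t_Delta a b) (\<lambda>m. tp_Delta m x y (rtrans f u) (rtrans g v)) h
    = teval (t_one_Delta x b) (rtrans f u) (\<lambda>q. teval (one_t_Delta a q) (ltrans y (rtrans g v)) h)"
    by (simp only: Delta_tp_ltrans[OF f g, symmetric] coassoc_one_t_Delta_rtrans[OF f cfun_ltrans[OF g] h]
        ltrans_rtrans)
qed

lemma teval_t_one_Delta_interchange:
  assumes f: "cfun f" and G: "cfun G" and h: "cfun h"
  shows "teval (t_one_Delta x b) f (\<lambda>q. Delta_tp a u q G h)
    = teval (Delta_t_one a u) G (\<lambda>p. teval (one_t_Delta p b) (ltrans x f) h)"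
proof -
  have "(\<lambda>q. Delta_tp a u q G h) = (\<lambda>q. teval (Delta_t_one a u) G (rtrans h q))"
    by (simp add: teval_Delta_t_one_Delta_tp G h)
  moreover have "(\<lambda>p. teval (one_t_Delta p b) (ltrans x f) h) = (\<lambda>p. teval (t_one_Delta x b) f (ltrans p h))"
    by (simp add: teval_one_t_Delta_t_one_Delta f h)
  ultimately show ?thesis
    using teval_teval_interchange[OF t_one_Delta_T2 Delta_t_one_T2 f G h] by simp
qed

subsection \<open>The antipode on the elements (\<iota> \<otimes> \<phi>)(\<Delta>(a)(1 \<otimes> b))\<close>

definition phi_slice :: "'a \<Rightarrow> 'a \<Rightarrow> 'a" where
  "phi_slice a b = slice_r \<phi> (Delta_one_t a b)"

lemma S_phi_slice: "S (phi_slice a b) = slice_r \<phi> (one_t_Delta a b)"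
  using antipode_S by (simp add: antipode_def phi_slice_def Delta_one_t_def one_t_Delta_def)

lemma S_inv: "S (inv S x) = x"
  using S_bij by (simp add: bij_is_surj surj_f_inv_f)

lemma clin_inv_S: "clin (inv S)"
  by (rule clin_inv[OF S_bij S_clin])

lemma teval_one_t_Delta_phi:
  assumes g: "cfun g"
  shows "teval (one_t_Delta a b) (ltrans x g) \<phi> = Delta_tp a (inv S x) b (\<lambda>z. g (S z)) \<phi>"
proof -
  have gS: "cfun (\<lambda>z. g (S z))" by (rule cfun_compose_clin[OF g S_clin])
  have "teval (one_t_Delta a b) (ltrans x g) \<phi> = g (x * S (phi_slice a b))"
    using teval_slice_r[OF one_t_Delta_T2 cfun_phi cfun_ltrans[OF g]] by (simp add: S_phi_slice)
  also have "\<dots> = g (S (phi_slice a b * inv S x))" by (simp add: S_anti_mult S_inv)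
  also have "\<dots> = teval (Delta_one_t a b) (rtrans (\<lambda>z. g (S z)) (inv S x)) \<phi>"
    using teval_slice_r[OF Delta_one_t_T2 cfun_phi cfun_rtrans[OF gS]] by (simp add: phi_slice_def)
  also have "\<dots> = Delta_tp a (inv S x) b (\<lambda>z. g (S z)) \<phi>"
    by (rule teval_Delta_one_t_Delta_tp[OF gS cfun_phi])
  finally show ?thesis .
qed

lemma tp_Delta_S_phi_slice:
  assumes f: "cfun f" and g: "cfun g"
  shows "tp_Delta (S (phi_slice a b)) x y f g
    = Delta_tp (phi_slice a b) (inv S y) (inv S x) (\<lambda>z. g (S z)) (\<lambda>z. f (S z))"
proof -
  have gS: "cfun (\<lambda>z. g (S z))" and fS: "cfun (\<lambda>z. f (S z))"
    by (simp_all add: cfun_compose_clin f g S_clin)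
  have "tp_Delta (S (phi_slice a b)) x y f g = teval (one_t_Delta a b) (\<lambda>m. tp_Delta m x y f g) \<phi>"
    unfolding S_phi_slice by (rule teval_slice_r[OF one_t_Delta_T2 cfun_phi cfun_tp_Delta_a, symmetric])
  also have "\<dots> = teval (t_one_Delta x b) f (\<lambda>q. teval (one_t_Delta a q) (ltrans y g) \<phi>)"
    by (rule coassoc_one_t_Delta[OF f g cfun_phi])
  also have "\<dots> = teval (t_one_Delta x b) f (\<lambda>q. Delta_tp a (inv S y) q (\<lambda>z. g (S z)) \<phi>)"
    by (simp only: teval_one_t_Delta_phi[OF g])
  also have "\<dots> = teval (Delta_t_one a (inv S y)) (\<lambda>z. g (S z)) (\<lambda>p. teval (one_t_Delta p b) (ltrans x f) \<phi>)"
    by (rule teval_t_one_Delta_interchange[OF f gS cfun_phi])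
  also have "\<dots> = teval (Delta_t_one a (inv S y)) (\<lambda>z. g (S z)) (\<lambda>p. Delta_tp p (inv S x) b (\<lambda>z. f (S z)) \<phi>)"
    by (simp only: teval_one_t_Delta_phi[OF f])
  also have "\<dots> = teval (Delta_one_t a b) (\<lambda>m. Delta_tp m (inv S y) (inv S x) (\<lambda>z. g (S z)) (\<lambda>z. f (S z))) \<phi>"
    by (rule coassoc_Delta_one_t[OF gS fS cfun_phi, symmetric])
  also have "\<dots> = Delta_tp (phi_slice a b) (inv S y) (inv S x) (\<lambda>z. g (S z)) (\<lambda>z. f (S z))"
    unfolding phi_slice_def by (rule teval_slice_r[OF Delta_one_t_T2 cfun_phi cfun_Delta_tp_a])
  finally show ?thesis .
qed

lemma Delta_tp_S_phi_slice:
  assumes f: "cfun f" and g: "cfun g"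
  shows "Delta_tp (S (phi_slice a b)) c d f g
    = tp_Delta (phi_slice a b) (inv S d) (inv S c) (\<lambda>z. g (S z)) (\<lambda>z. f (S z))"
proof (rule tensor_form_eq_ltrans[OF nondeg tensor_form_Delta_tp
      tensor_form_flip_clin[OF tensor_form_tp_Delta S_clin] _ f g])
  fix f g :: "'a \<Rightarrow> complex" and x y assume f: "cfun f" and g: "cfun g"
  have gS: "cfun (\<lambda>z. g (S z))" and fS: "cfun (\<lambda>z. f (S z))"
    by (simp_all add: cfun_compose_clin f g S_clin)
  have "Delta_tp (S (phi_slice a b)) c d (ltrans x f) (ltrans y g)
      = tp_Delta (S (phi_slice a b)) x y (rtrans f c) (rtrans g d)"
    by (rule Delta_tp_ltrans[OF f g])
  also have "\<dots> = Delta_tp (phi_slice a b) (inv S y) (inv S x) (\<lambda>z. rtrans g d (S z)) (\<lambda>z. rtrans f c (S z))"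
    by (rule tp_Delta_S_phi_slice[OF cfun_rtrans[OF f] cfun_rtrans[OF g]])
  also have "\<dots> = Delta_tp (phi_slice a b) (inv S y) (inv S x)
      (ltrans (inv S d) (\<lambda>z. g (S z))) (ltrans (inv S c) (\<lambda>z. f (S z)))"
    by (simp add: ltrans_def S_anti_mult S_inv)
  also have "\<dots> = tp_Delta (phi_slice a b) (inv S d) (inv S c)
      (rtrans (\<lambda>z. g (S z)) (inv S y)) (rtrans (\<lambda>z. f (S z)) (inv S x))"
    by (rule Delta_tp_ltrans[OF gS fS])
  also have "\<dots> = tp_Delta (phi_slice a b) (inv S d) (inv S c) (\<lambda>z. ltrans y g (S z)) (\<lambda>z. ltrans x f (S z))"
    by (simp add: rtrans_def S_anti_mult S_inv)
  finally show "Delta_tp (S (phi_slice a b)) c d (ltrans x f) (ltrans y g)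
      = tp_Delta (phi_slice a b) (inv S d) (inv S c) (\<lambda>z. ltrans y g (S z)) (\<lambda>z. ltrans x f (S z))" .
qed

lemma flipSS_inv_S_T2: "y \<in> T2 \<Longrightarrow> flipSS (inv S) y \<in> T2"
  by (rule flipSS_T2[OF _ clin_inv_S])

lemma Delta_S_phi_slice_mult:
  assumes y: "y \<in> T2"
  shows "fst (\<Delta> (S (phi_slice a b))) y = flipSS S (snd (\<Delta> (phi_slice a b)) (flipSS (inv S) y))"
proof (rule T2_eqI[OF Delta_mult_T2[OF y] flipSS_T2[OF mult_Delta_T2[OF flipSS_inv_S_T2[OF y]] S_clin]])
  obtain n c d where y_sum: "y = tensor_sum {..<(n::nat)} c d" using T2_tensor_sum[OF y] by blast
  fix f g :: "'a \<Rightarrow> complex" assume f: "cfun f" and g: "cfun g"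
  have gS: "cfun (\<lambda>z. g (S z))" and fS: "cfun (\<lambda>z. f (S z))"
    by (simp_all add: cfun_compose_clin f g S_clin)
  have "teval (fst (\<Delta> (S (phi_slice a b))) y) f g = (\<Sum>i<n. Delta_tp (S (phi_slice a b)) (c i) (d i) f g)"
    unfolding y_sum by (rule teval_Delta_tensor_sum[OF _ f g]) simp
  also have "\<dots> = (\<Sum>i<n. tp_Delta (phi_slice a b) (inv S (d i)) (inv S (c i)) (\<lambda>z. g (S z)) (\<lambda>z. f (S z)))"
    by (simp only: Delta_tp_S_phi_slice[OF f g])
  also have "\<dots> = teval (snd (\<Delta> (phi_slice a b)) (flipSS (inv S) y)) (\<lambda>z. g (S z)) (\<lambda>z. f (S z))"
    unfolding y_sum flipSS_tensor_sum[OF clin_inv_S]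
    by (rule teval_tensor_sum_Delta[OF _ gS fS, symmetric]) simp
  also have "\<dots> = teval (flipSS S (snd (\<Delta> (phi_slice a b)) (flipSS (inv S) y))) f g"
    by (rule teval_flipSS[OF f g, symmetric])
  finally show "teval (fst (\<Delta> (S (phi_slice a b))) y) f g
      = teval (flipSS S (snd (\<Delta> (phi_slice a b)) (flipSS (inv S) y))) f g" .
qed

lemma mult_Delta_S_phi_slice:
  assumes y: "y \<in> T2"
  shows "snd (\<Delta> (S (phi_slice a b))) y = flipSS S (fst (\<Delta> (phi_slice a b)) (flipSS (inv S) y))"
proof (rule T2_eqI[OF mult_Delta_T2[OF y] flipSS_T2[OF Delta_mult_T2[OF flipSS_inv_S_T2[OF y]] S_clin]])
  obtain n c d where y_sum: "y = tensor_sum {..<(n::nat)} c d" using T2_tensor_sum[OF y] by blast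
  fix f g :: "'a \<Rightarrow> complex" assume f: "cfun f" and g: "cfun g"
  have gS: "cfun (\<lambda>z. g (S z))" and fS: "cfun (\<lambda>z. f (S z))"
    by (simp_all add: cfun_compose_clin f g S_clin)
  have "teval (snd (\<Delta> (S (phi_slice a b))) y) f g = (\<Sum>i<n. tp_Delta (S (phi_slice a b)) (c i) (d i) f g)"
    unfolding y_sum by (rule teval_tensor_sum_Delta[OF _ f g]) simp
  also have "\<dots> = (\<Sum>i<n. Delta_tp (phi_slice a b) (inv S (d i)) (inv S (c i)) (\<lambda>z. g (S z)) (\<lambda>z. f (S z)))"
    by (simp only: tp_Delta_S_phi_slice[OF f g])
  also have "\<dots> = teval (fst (\<Delta> (phi_slice a b)) (flipSS (inv S) y)) (\<lambda>z. g (S z)) (\<lambda>z. f (S z))"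
    unfolding y_sum flipSS_tensor_sum[OF clin_inv_S]
    by (rule teval_Delta_tensor_sum[OF _ gS fS, symmetric]) simp
  also have "\<dots> = teval (flipSS S (fst (\<Delta> (phi_slice a b)) (flipSS (inv S) y))) f g"
    by (rule teval_flipSS[OF f g, symmetric])
  finally show "teval (snd (\<Delta> (S (phi_slice a b))) y) f g
      = teval (flipSS S (fst (\<Delta> (phi_slice a b)) (flipSS (inv S) y))) f g" .
qed

subsection \<open>The elements (\<iota> \<otimes> \<phi>)(\<Delta>(a)(1 \<otimes> b)) span the algebra\<close>

lemma slice_r_counit_Delta_one_t: "slice_r \<epsilon> (Delta_one_t a b) = cscale (\<epsilon> b) a"
proof -
  define z where "z = slice_r \<epsilon> (Delta_one_t a b)"
  have rtrans_counit: "rtrans \<epsilon> b = (\<lambda>x. \<epsilon> b * \<epsilon> x)"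
    by (simp add: fun_eq_iff counit_mult mult.commute)
  have "z * d = cscale (\<epsilon> b) a * d" for d
  proof (rule eq_if_all_cfun_eq)
    fix f :: "'a \<Rightarrow> complex" assume f: "cfun f"
    have "f (z * d) = teval (Delta_one_t a b) (rtrans f d) \<epsilon>"
      using teval_slice_r[OF Delta_one_t_T2 cfun_counit cfun_rtrans[OF f]] by (simp add: z_def)
    also have "\<dots> = teval (Delta_t_one a d) f (\<lambda>x. \<epsilon> b * \<epsilon> x)"
      by (simp only: teval_Delta_one_t_Delta_t_one[OF f cfun_counit] rtrans_counit)
    also have "\<dots> = \<epsilon> b * f (a * d)"
      by (simp only: tensor_form_cmult2[OF tensor_form_Delta_t_one f cfun_counit] teval_Delta_t_one_counit[OF f])
    also have "\<dots> = f (cscale (\<epsilon> b) a * d)" by (simp only: cs_mult_left cfun_scale[OF f])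
    finally show "f (z * d) = f (cscale (\<epsilon> b) a * d)" .
  qed
  then have "(z - cscale (\<epsilon> b) a) * d = 0" for d by (simp add: left_diff_distrib)
  then have "z - cscale (\<epsilon> b) a = 0" using nondeg unfolding nondegenerate_def by blast
  then show ?thesis by (simp add: z_def)
qed

lemma teval_Delta_one_t_eq_0:
  assumes \<omega>: "cfun \<omega>" and vanish: "\<And>a b. \<omega> (phi_slice a b) = 0" and g: "cfun g"
  shows "teval (Delta_one_t a b) \<omega> g = 0"
proof -
  define y where "y = slice_l \<omega> (Delta_one_t a b)"
  have y: "teval (Delta_one_t a b) \<omega> G = G y" if "cfun G" for G
    using teval_slice_l[OF Delta_one_t_T2 \<omega> that] by (simp add: y_def)
  have "\<phi> (y * c) = 0" for c
  proof -
    have "\<phi> (y * c) = teval (Delta_one_t a b) \<omega> (rtrans \<phi> c)" using y[OF cfun_rtrans[OF cfun_phi]] by simp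
    also have "\<dots> = teval (Delta_one_t a (b * c)) \<omega> \<phi>" by (rule teval_Delta_one_t_mult[OF \<omega> cfun_phi])
    also have "\<dots> = \<omega> (phi_slice a (b * c))"
      unfolding phi_slice_def by (rule teval_slice_r[OF Delta_one_t_T2 cfun_phi \<omega>])
    finally show ?thesis by (simp add: vanish)
  qed
  then have "y = 0" by (rule faithful_phi_eq_0)
  then show ?thesis using y[OF g] cfun_zero[OF g] by simp
qed

lemma counit_nonzero: "\<exists>b. \<epsilon> b \<noteq> 0"
proof (rule ccontr)
  assume "\<nexists>b. \<epsilon> b \<noteq> 0"
  then have counit_0: "\<epsilon> = (\<lambda>_. 0)" by auto
  have "a * b = 0" for a b :: 'a
  proof (rule zero_if_all_cfun_vanish)
    fix g :: "'a \<Rightarrow> complex" assume g: "cfun g"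
    have "teval (Delta_one_t a b) \<epsilon> g = 0"
      using T2_bil_cmult[OF Delta_one_t_T2 bil_product[OF cfun_counit g], where c = 0]
      by (simp add: teval_def counit_0)
    then show "g (a * b) = 0" by (simp add: teval_Delta_one_t_counit[OF g])
  qed
  then have all_0: "a = 0" for a :: 'a using nondeg unfolding nondegenerate_def by blast
  obtain a where "\<phi> a \<noteq> 0" using phi_nonzero by blast
  then show False using all_0[of a] cfun_zero[OF cfun_phi] by simp
qed

text \<open>A functional \<omega> vanishing on all (\<iota> \<otimes> \<phi>)(\<Delta>(a)(1 \<otimes> b)) kills (\<omega> \<otimes> \<iota>)(\<Delta>(x)(1 \<otimes> b)) by
  faithfulness of \<phi>; applying \<epsilon> gives \<epsilon>(b) \<omega>(x) = 0.\<close>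

lemma span_phi_slice: "x \<in> cvs.span {phi_slice a b | a b. True}"
proof (rule ccontr)
  assume "x \<notin> cvs.span {phi_slice a b | a b. True}"
  then obtain \<omega> where \<omega>: "cfun \<omega>" "\<forall>y\<in>cvs.span {phi_slice a b | a b. True}. \<omega> y = 0" "\<omega> x = 1"
    using cfun_separates_span by blast
  have vanish: "\<omega> (phi_slice a b) = 0" for a b
    using \<omega>(2) cvs.span_base[of "phi_slice a b" "{phi_slice a b | a b. True}"] by blast
  obtain b where b: "\<epsilon> b \<noteq> 0" using counit_nonzero by blast
  have "\<epsilon> b * \<omega> x = \<omega> (slice_r \<epsilon> (Delta_one_t x b))"
    by (simp add: slice_r_counit_Delta_one_t cfun_scale[OF \<omega>(1)])
  also have "\<dots> = teval (Delta_one_t x b) \<omega> \<epsilon>"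
    by (rule teval_slice_r[OF Delta_one_t_T2 cfun_counit \<omega>(1), symmetric])
  also have "\<dots> = 0" by (rule teval_Delta_one_t_eq_0[OF \<omega>(1) vanish cfun_counit])
  finally show False using b \<omega>(3) by simp
qed

lemma counit_antipode: "\<epsilon> (S x) = \<epsilon> x"
  using span_phi_slice[of x]
proof (induction rule: cvs.span_induct_alt)
  case base then show ?case by (simp add: clin_zero[OF S_clin] cfun_zero[OF cfun_counit])
next
  case (step c g y)
  then obtain a b where g: "g = phi_slice a b" by blast
  have "\<epsilon> (S g) = \<phi> (a * b)"
    using teval_slice_r[OF one_t_Delta_T2 cfun_phi cfun_counit] teval_one_t_Delta_counit[OF cfun_phi]
    by (simp add: g S_phi_slice)
  also have "\<dots> = \<epsilon> g"
    using teval_slice_r[OF Delta_one_t_T2 cfun_phi cfun_counit] teval_Delta_one_t_counit[OF cfun_phi]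
    by (simp add: g phi_slice_def)
  finally show ?case
    using step(2) by (simp add: clin_add[OF S_clin] clin_scale[OF S_clin] cfun_add[OF cfun_counit]
        cfun_scale[OF cfun_counit])
qed

lemma Delta_S_phi_slice: "mult_eq T2 (\<Delta> (S (phi_slice a b))) (flipSS_M S (\<Delta> (phi_slice a b)))"
  by (simp add: mult_eq_def flipSS_M_def Delta_S_phi_slice_mult mult_Delta_S_phi_slice)

lemma Delta_antipode_lincomb:
  assumes g: "mult_eq T2 (\<Delta> (S g)) (flipSS_M S (\<Delta> g))" and y: "mult_eq T2 (\<Delta> (S y)) (flipSS_M S (\<Delta> y))"
  shows "mult_eq T2 (\<Delta> (S (cscale c g + y))) (flipSS_M S (\<Delta> (cscale c g + y)))"
  unfolding mult_eq_def flipSS_M_def fst_conv snd_conv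
proof (intro conjI ballI)
  fix w :: "'a t2" assume w: "w \<in> T2"
  note w' = flipSS_inv_S_T2[OF w]
  have S_lincomb: "S (cscale c g + y) = cscale c (S g) + S y"
    by (simp add: clin_add[OF S_clin] clin_scale[OF S_clin])
  show "fst (\<Delta> (S (cscale c g + y))) w = flipSS S (snd (\<Delta> (cscale c g + y)) (flipSS (inv S) w))"
    using g y w unfolding mult_eq_def flipSS_M_def
    by (simp add: S_lincomb Delta_add[OF w] Delta_scale[OF w] Delta_add[OF w'] Delta_scale[OF w']
        flipSS_addt flipSS_scalet)
  show "snd (\<Delta> (S (cscale c g + y))) w = flipSS S (fst (\<Delta> (cscale c g + y)) (flipSS (inv S) w))"
    using g y w unfolding mult_eq_def flipSS_M_def
    by (simp add: S_lincomb Delta_add[OF w] Delta_scale[OF w] Delta_add[OF w'] Delta_scale[OF w']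
        flipSS_addt flipSS_scalet)
qed

lemma Delta_antipode: "mult_eq T2 (\<Delta> (S x)) (flipSS_M S (\<Delta> x))"
  using span_phi_slice[of x]
proof (induction rule: cvs.span_induct_alt)
  case base
  have "fst (\<Delta> 0) w = (\<lambda>\<beta>. 0)" "snd (\<Delta> 0) w = (\<lambda>\<beta>. 0)" if "w \<in> T2" for w
    using Delta_scale[OF that, of 0 0] by (simp_all add: scalet_def)
  then show ?case
    by (simp add: mult_eq_def flipSS_M_def clin_zero[OF S_clin] flipSS_inv_S_T2 flipSS_zero)
next
  case (step c g y)
  then show ?case using Delta_S_phi_slice Delta_antipode_lincomb by blast
qed

end

theorem proposition2p1:
  fixes \<Delta> :: "'a::calg \<Rightarrow> 'a m2" and \<epsilon> :: "'a \<Rightarrow> complex" and S :: "'a \<Rightarrow> 'a"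
  assumes "alg_quantum_hypergroup \<Delta> \<epsilon> S"
  shows "\<forall>x. \<epsilon> (S x) = \<epsilon> x \<and> mult_eq T2 (\<Delta> (S x)) (flipSS_M S (\<Delta> x))"
proof -
  from assms obtain \<phi> where "quantum_hypergroup \<Delta> \<epsilon> S \<phi>"
    unfolding alg_quantum_hypergroup_def quantum_hypergroup_def by blast
  then interpret quantum_hypergroup \<Delta> \<epsilon> S \<phi> .
  show ?thesis using counit_antipode Delta_antipode by blast
qed

end
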